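(* Let $(M,P,g)$ be a 4-dimensional $\mathcal W_1$-manifold which admits the natural connection $\widetilde D$ (parameters $\lambda=0$, $\mu=-\frac14$) and suppose the curvature tensor of $\widetilde D$ is a Riemannian $P$-tensor. Then the curvature tensor $R$ of the Levi-Civita connection, with scalar curvatures $\tau,\tau^*$, has the form $$R=\frac1{64}\left\{8\tau+4\,\delta+5\,\theta(\Omega)\right\}(\pi_1+\pi_2)+\frac1{64}\left\{8\tau^*-4\operatorname{div}\Omega+\theta(P\Omega)\right\}\pi_3-\frac{\theta(\Omega)}{16}\pi_2-\psi_1(S')-\psi_2(S''),$$ where $S'(y,z)=\frac1{16}\theta(y)\theta(z)$ and $S''(y,z)=-\frac14(\widetilde D_y\theta)(Pz)-\frac1{16}\theta(Py)\theta(Pz)$.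
   Context: A Riemannian almost product manifold $(M,P,g)$: $M$ smooth, $P$ a $(1,1)$-tensor field with $P^2=\mathrm{id}$, $g$ Riemannian with $g(Px,Py)=g(x,y)$; $\operatorname{tr}P=0$, $\dim M=2n$ (here $n=2$). $\nabla$ is the Levi-Civita connection, curvature $R(x,y)z=\nabla_x\nabla_yz-\nabla_y\nabla_xz-\nabla_{[x,y]}z$, $R(x,y,z,w)=g(R(x,y)z,w)$, $\tau=\sum g^{ij}g^{ks}R(e_k,e_i,e_j,e_s)$, $\tau^*=\sum g^{ij}g^{ks}R(e_k,e_i,e_j,Pe_s)$ ($g^{ij}$ the inverse matrix of $g$ in a basis $\{e_i\}$). $F(x,y,z)=g((\nabla_xP)y,z)$, $\theta(x)=\sum g^{ij}F(e_i,e_j,x)$, $g(\Omega,x)=\theta(x)$. $\operatorname{div}\Omega=\sum g^{ij}(\nabla_{e_i}\theta)(e_j)$ and $\delta=\sum g^{ij}(\nabla_{e_i}\theta)(Pe_j)$. $(M,P,g)$ is a $\mathcal W_1$-manifold if $F(x,y,z)=\frac1{2n}\{g(x,y)\theta(z)-g(x,Py)\theta(Pz)+g(x,z)\theta(y)-g(x,Pz)\theta(Py)\}$. A natural connection is a linear connection with $\nabla'P=\nabla'g=0$; $\widetilde D$ is the natural connection with torsion $g(\widetilde D_xy-\widetilde D_yx-[x,y],z)=-\frac1{2n}\{g(y,Pz)\theta(x)-g(x,Pz)\theta(y)\}$; explicitly (for $n=2$) $\widetilde D_yz=\nabla_yz+\frac14\{\theta(z)Py-g(y,Pz)\Omega\}$.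 A Riemannian $P$-tensor is a $(0,4)$-tensor $L$ with $L(x,y,z,w)=-L(y,x,z,w)=-L(x,y,w,z)$, $L(x,y,z,w)+L(y,z,x,w)+L(z,x,y,w)=0$, $L(x,y,Pz,Pw)=L(x,y,z,w)$. $\widetilde g(x,y)=g(x,Py)$; $\psi_1(S)(x,y,z,w)=g(y,z)S(x,w)-g(x,z)S(y,w)+S(y,z)g(x,w)-S(x,z)g(y,w)$, $\psi_2(S)(x,y,z,w)=\psi_1(S)(x,y,Pz,Pw)$; $\pi_1=\frac12\psi_1(g)$, $\pi_2=\frac12\psi_2(g)$, $\pi_3=\psi_1(\widetilde g)$. *)

theory Defs
  imports "HOL-Analysis.Analysis"
begin

text \<open>Local (chart) model: the manifold M is an open set U in a 4-dimensional
Euclidean space 'a.  All tensors are evaluated on vector fields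
pointwise.\<close>

fun Ck :: "nat \<Rightarrow> 'a::real_normed_vector set \<Rightarrow> ('a \<Rightarrow> 'b::real_normed_vector) \<Rightarrow> bool" where
  "Ck 0 U f = continuous_on U f"
| "Ck (Suc k) U f = (f differentiable_on U \<and> (\<forall>v. Ck k U (\<lambda>p. frechet_derivative f (at p) v)))"

definition smooth_on' :: "'a::real_normed_vector set \<Rightarrow> ('a \<Rightarrow> 'b::real_normed_vector) \<Rightarrow> bool" where
  "smooth_on' U f = (\<forall>k. Ck k U f)"

definition vf :: "'a::euclidean_space set \<Rightarrow> ('a \<Rightarrow> 'a) set" where
  "vf U = {X. smooth_on' U X}"

definition cf :: "'a \<Rightarrow> ('a \<Rightarrow> 'a)" where
  "cf u = (\<lambda>_. u)"

definition gF :: "('a \<Rightarrow> 'a \<Rightarrow> 'a \<Rightarrow> real) \<Rightarrow> ('a \<Rightarrow> 'a) \<Rightarrow> ('a \<Rightarrow> 'a) \<Rightarrow> 'a \<Rightarrow> real" where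
  "gF g X Y = (\<lambda>p. g p (X p) (Y p))"

definition PF :: "('a \<Rightarrow> 'a \<Rightarrow> 'a) \<Rightarrow> ('a \<Rightarrow> 'a) \<Rightarrow> ('a \<Rightarrow> 'a)" where
  "PF P X = (\<lambda>p. P p (X p))"

definition ddir :: "('a::real_normed_vector \<Rightarrow> 'a) \<Rightarrow> ('a \<Rightarrow> 'b::real_normed_vector) \<Rightarrow> 'a \<Rightarrow> 'b" where
  "ddir X f = (\<lambda>p. frechet_derivative f (at p) (X p))"

definition lie :: "('a::real_normed_vector \<Rightarrow> 'a) \<Rightarrow> ('a \<Rightarrow> 'a) \<Rightarrow> 'a \<Rightarrow> 'a" where
  "lie X Y = (\<lambda>p. ddir X Y p - ddir Y X p)"

definition rapm :: "'a::euclidean_space set \<Rightarrow> ('a \<Rightarrow> 'a \<Rightarrow> 'a \<Rightarrow> real) \<Rightarrow> ('a \<Rightarrow> 'a \<Rightarrow> 'a) \<Rightarrow> bool" where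
  "rapm U g P = (open U \<and> U \<noteq> {} \<and> DIM('a) = 4 \<and>
     (\<forall>u v. smooth_on' U (\<lambda>p. g p u v)) \<and> (\<forall>u. smooth_on' U (\<lambda>p. P p u)) \<and>
     (\<forall>p\<in>U. bilinear (g p) \<and> (\<forall>u v. g p u v = g p v u) \<and> (\<forall>u. u \<noteq> 0 \<longrightarrow> g p u u > 0) \<and>
        linear (P p) \<and> (\<forall>u. P p (P p u) = u) \<and>
        (\<forall>u v. g p (P p u) (P p v) = g p u v) \<and>
        (\<Sum>b\<in>Basis. P p b \<bullet> b) = 0))"

definition is_LC :: "'a::euclidean_space set \<Rightarrow> ('a \<Rightarrow> 'a \<Rightarrow> 'a \<Rightarrow> real)
    \<Rightarrow> (('a \<Rightarrow> 'a) \<Rightarrow> ('a \<Rightarrow> 'a) \<Rightarrow> ('a \<Rightarrow> 'a)) \<Rightarrow> bool" where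
  "is_LC U g nabla = (\<forall>X\<in>vf U. \<forall>Y\<in>vf U. nabla X Y \<in> vf U \<and>
     (\<forall>Z\<in>vf U. \<forall>f::'a \<Rightarrow> real. smooth_on' U f \<longrightarrow> (\<forall>p\<in>U.
        nabla (\<lambda>q. X q + Y q) Z p = nabla X Z p + nabla Y Z p \<and>
        nabla (\<lambda>q. f q *\<^sub>R X q) Z p = f p *\<^sub>R nabla X Z p \<and>
        nabla X (\<lambda>q. Y q + Z q) p = nabla X Y p + nabla X Z p \<and>
        nabla X (\<lambda>q. f q *\<^sub>R Y q) p = ddir X f p *\<^sub>R Y p + f p *\<^sub>R nabla X Y p \<and>
        nabla X Y p - nabla Y X p = lie X Y p \<and>
        ddir X (gF g Y Z) p = gF g (nabla X Y) Z p + gF g Y (nabla X Z) p)))"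

definition curv :: "(('a::real_normed_vector \<Rightarrow> 'a) \<Rightarrow> ('a \<Rightarrow> 'a) \<Rightarrow> ('a \<Rightarrow> 'a))
    \<Rightarrow> ('a \<Rightarrow> 'a) \<Rightarrow> ('a \<Rightarrow> 'a) \<Rightarrow> ('a \<Rightarrow> 'a) \<Rightarrow> 'a \<Rightarrow> 'a" where
  "curv D X Y Z = (\<lambda>p. D X (D Y Z) p - D Y (D X Z) p - D (lie X Y) Z p)"

definition curv4 :: "('a \<Rightarrow> 'a \<Rightarrow> 'a \<Rightarrow> real) \<Rightarrow> (('a::real_normed_vector \<Rightarrow> 'a) \<Rightarrow> ('a \<Rightarrow> 'a) \<Rightarrow> ('a \<Rightarrow> 'a))
    \<Rightarrow> ('a \<Rightarrow> 'a) \<Rightarrow> ('a \<Rightarrow> 'a) \<Rightarrow> ('a \<Rightarrow> 'a) \<Rightarrow> ('a \<Rightarrow> 'a) \<Rightarrow> 'a \<Rightarrow> real" where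
  "curv4 g D X Y Z W = gF g (curv D X Y Z) W"

text \<open>Inverse matrix g^{ij} of g in the standard basis: the matrix of g(p) is the matrix
of the linear map Gmap g p with respect to Basis, and g^{ij} are the entries of its inverse.\<close>
definition Gmap :: "('a::euclidean_space \<Rightarrow> 'a \<Rightarrow> 'a \<Rightarrow> real) \<Rightarrow> 'a \<Rightarrow> 'a \<Rightarrow> 'a" where
  "Gmap g p u = (\<Sum>b\<in>Basis. g p u b *\<^sub>R b)"

definition ginv :: "('a::euclidean_space \<Rightarrow> 'a \<Rightarrow> 'a \<Rightarrow> real) \<Rightarrow> 'a \<Rightarrow> 'a \<Rightarrow> 'a \<Rightarrow> real" where
  "ginv g p i j = inv (Gmap g p) i \<bullet> j"

definition Ften :: "('a::euclidean_space \<Rightarrow> 'a \<Rightarrow> 'a \<Rightarrow> real) \<Rightarrow> ('a \<Rightarrow> 'a \<Rightarrow> 'a)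
    \<Rightarrow> (('a \<Rightarrow> 'a) \<Rightarrow> ('a \<Rightarrow> 'a) \<Rightarrow> ('a \<Rightarrow> 'a))
    \<Rightarrow> ('a \<Rightarrow> 'a) \<Rightarrow> ('a \<Rightarrow> 'a) \<Rightarrow> ('a \<Rightarrow> 'a) \<Rightarrow> 'a \<Rightarrow> real" where
  "Ften g P nabla X Y Z = gF g (\<lambda>p. nabla X (PF P Y) p - P p (nabla X Y p)) Z"

definition theta :: "('a::euclidean_space \<Rightarrow> 'a \<Rightarrow> 'a \<Rightarrow> real) \<Rightarrow> ('a \<Rightarrow> 'a \<Rightarrow> 'a)
    \<Rightarrow> (('a \<Rightarrow> 'a) \<Rightarrow> ('a \<Rightarrow> 'a) \<Rightarrow> ('a \<Rightarrow> 'a)) \<Rightarrow> ('a \<Rightarrow> 'a) \<Rightarrow> 'a \<Rightarrow> real" where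
  "theta g P nabla X = (\<lambda>p. \<Sum>i\<in>Basis. \<Sum>j\<in>Basis. ginv g p i j * Ften g P nabla (cf i) (cf j) X p)"

definition Omega :: "('a::euclidean_space \<Rightarrow> 'a \<Rightarrow> 'a \<Rightarrow> real) \<Rightarrow> ('a \<Rightarrow> 'a \<Rightarrow> 'a)
    \<Rightarrow> (('a \<Rightarrow> 'a) \<Rightarrow> ('a \<Rightarrow> 'a) \<Rightarrow> ('a \<Rightarrow> 'a)) \<Rightarrow> 'a \<Rightarrow> 'a" where
  "Omega g P nabla = (\<lambda>p. THE v. \<forall>u. g p v u = theta g P nabla (cf u) p)"

definition tau :: "('a::euclidean_space \<Rightarrow> 'a \<Rightarrow> 'a \<Rightarrow> real)
    \<Rightarrow> (('a \<Rightarrow> 'a) \<Rightarrow> ('a \<Rightarrow> 'a) \<Rightarrow> ('a \<Rightarrow> 'a)) \<Rightarrow> 'a \<Rightarrow> real" where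
  "tau g nabla = (\<lambda>p. \<Sum>i\<in>Basis. \<Sum>j\<in>Basis. \<Sum>k\<in>Basis. \<Sum>s\<in>Basis.
      ginv g p i j * ginv g p k s * curv4 g nabla (cf k) (cf i) (cf j) (cf s) p)"

definition taustar :: "('a::euclidean_space \<Rightarrow> 'a \<Rightarrow> 'a \<Rightarrow> real) \<Rightarrow> ('a \<Rightarrow> 'a \<Rightarrow> 'a)
    \<Rightarrow> (('a \<Rightarrow> 'a) \<Rightarrow> ('a \<Rightarrow> 'a) \<Rightarrow> ('a \<Rightarrow> 'a)) \<Rightarrow> 'a \<Rightarrow> real" where
  "taustar g P nabla = (\<lambda>p. \<Sum>i\<in>Basis. \<Sum>j\<in>Basis. \<Sum>k\<in>Basis. \<Sum>s\<in>Basis.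
      ginv g p i j * ginv g p k s * curv4 g nabla (cf k) (cf i) (cf j) (PF P (cf s)) p)"

definition covtheta :: "('a::euclidean_space \<Rightarrow> 'a \<Rightarrow> 'a \<Rightarrow> real) \<Rightarrow> ('a \<Rightarrow> 'a \<Rightarrow> 'a)
    \<Rightarrow> (('a \<Rightarrow> 'a) \<Rightarrow> ('a \<Rightarrow> 'a) \<Rightarrow> ('a \<Rightarrow> 'a))
    \<Rightarrow> (('a \<Rightarrow> 'a) \<Rightarrow> ('a \<Rightarrow> 'a) \<Rightarrow> ('a \<Rightarrow> 'a)) \<Rightarrow> ('a \<Rightarrow> 'a) \<Rightarrow> ('a \<Rightarrow> 'a) \<Rightarrow> 'a \<Rightarrow> real" where
  "covtheta g P nabla D X Y = (\<lambda>p. ddir X (theta g P nabla Y) p - theta g P nabla (D X Y) p)"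

definition divOmega :: "('a::euclidean_space \<Rightarrow> 'a \<Rightarrow> 'a \<Rightarrow> real) \<Rightarrow> ('a \<Rightarrow> 'a \<Rightarrow> 'a)
    \<Rightarrow> (('a \<Rightarrow> 'a) \<Rightarrow> ('a \<Rightarrow> 'a) \<Rightarrow> ('a \<Rightarrow> 'a)) \<Rightarrow> 'a \<Rightarrow> real" where
  "divOmega g P nabla = (\<lambda>p. \<Sum>i\<in>Basis. \<Sum>j\<in>Basis.
      ginv g p i j * covtheta g P nabla nabla (cf i) (cf j) p)"

definition deltaP :: "('a::euclidean_space \<Rightarrow> 'a \<Rightarrow> 'a \<Rightarrow> real) \<Rightarrow> ('a \<Rightarrow> 'a \<Rightarrow> 'a)
    \<Rightarrow> (('a \<Rightarrow> 'a) \<Rightarrow> ('a \<Rightarrow> 'a) \<Rightarrow> ('a \<Rightarrow> 'a)) \<Rightarrow> 'a \<Rightarrow> real" where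
  "deltaP g P nabla = (\<lambda>p. \<Sum>i\<in>Basis. \<Sum>j\<in>Basis.
      ginv g p i j * covtheta g P nabla nabla (cf i) (PF P (cf j)) p)"

definition is_W1 :: "'a::euclidean_space set \<Rightarrow> ('a \<Rightarrow> 'a \<Rightarrow> 'a \<Rightarrow> real) \<Rightarrow> ('a \<Rightarrow> 'a \<Rightarrow> 'a)
    \<Rightarrow> (('a \<Rightarrow> 'a) \<Rightarrow> ('a \<Rightarrow> 'a) \<Rightarrow> ('a \<Rightarrow> 'a)) \<Rightarrow> bool" where
  "is_W1 U g P nabla = (\<forall>X\<in>vf U. \<forall>Y\<in>vf U. \<forall>Z\<in>vf U. \<forall>p\<in>U.
     Ften g P nabla X Y Z p = (1/4) *
       (gF g X Y p * theta g P nabla Z p - gF g X (PF P Y) p * theta g P nabla (PF P Z) p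
        + gF g X Z p * theta g P nabla Y p - gF g X (PF P Z) p * theta g P nabla (PF P Y) p))"

definition Dtil :: "('a::euclidean_space \<Rightarrow> 'a \<Rightarrow> 'a \<Rightarrow> real) \<Rightarrow> ('a \<Rightarrow> 'a \<Rightarrow> 'a)
    \<Rightarrow> (('a \<Rightarrow> 'a) \<Rightarrow> ('a \<Rightarrow> 'a) \<Rightarrow> ('a \<Rightarrow> 'a)) \<Rightarrow> ('a \<Rightarrow> 'a) \<Rightarrow> ('a \<Rightarrow> 'a) \<Rightarrow> 'a \<Rightarrow> 'a" where
  "Dtil g P nabla Y Z = (\<lambda>p. nabla Y Z p + (1/4) *\<^sub>R
      (theta g P nabla Z p *\<^sub>R P p (Y p) - g p (Y p) (P p (Z p)) *\<^sub>R Omega g P nabla p))"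

definition is_RPtensor :: "'a::euclidean_space set \<Rightarrow> ('a \<Rightarrow> 'a \<Rightarrow> 'a)
    \<Rightarrow> (('a \<Rightarrow> 'a) \<Rightarrow> ('a \<Rightarrow> 'a) \<Rightarrow> ('a \<Rightarrow> 'a) \<Rightarrow> ('a \<Rightarrow> 'a) \<Rightarrow> 'a \<Rightarrow> real) \<Rightarrow> bool" where
  "is_RPtensor U P L = (\<forall>X\<in>vf U. \<forall>Y\<in>vf U. \<forall>Z\<in>vf U. \<forall>W\<in>vf U. \<forall>p\<in>U.
     L X Y Z W p = - L Y X Z W p \<and> L X Y Z W p = - L X Y W Z p \<and>
     L X Y Z W p + L Y Z X W p + L Z X Y W p = 0 \<and>
     L X Y (PF P Z) (PF P W) p = L X Y Z W p)"

definition psi1 :: "('a \<Rightarrow> 'a \<Rightarrow> 'a \<Rightarrow> real) \<Rightarrow> (('a \<Rightarrow> 'a) \<Rightarrow> ('a \<Rightarrow> 'a) \<Rightarrow> 'a \<Rightarrow> real)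
    \<Rightarrow> ('a \<Rightarrow> 'a) \<Rightarrow> ('a \<Rightarrow> 'a) \<Rightarrow> ('a \<Rightarrow> 'a) \<Rightarrow> ('a \<Rightarrow> 'a) \<Rightarrow> 'a \<Rightarrow> real" where
  "psi1 g S X Y Z W = (\<lambda>p. gF g Y Z p * S X W p - gF g X Z p * S Y W p
      + S Y Z p * gF g X W p - S X Z p * gF g Y W p)"

definition psi2 :: "('a \<Rightarrow> 'a \<Rightarrow> 'a \<Rightarrow> real) \<Rightarrow> ('a \<Rightarrow> 'a \<Rightarrow> 'a) \<Rightarrow> (('a \<Rightarrow> 'a) \<Rightarrow> ('a \<Rightarrow> 'a) \<Rightarrow> 'a \<Rightarrow> real)
    \<Rightarrow> ('a \<Rightarrow> 'a) \<Rightarrow> ('a \<Rightarrow> 'a) \<Rightarrow> ('a \<Rightarrow> 'a) \<Rightarrow> ('a \<Rightarrow> 'a) \<Rightarrow> 'a \<Rightarrow> real" where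
  "psi2 g P S X Y Z W = psi1 g S X Y (PF P Z) (PF P W)"

definition pi1 where "pi1 g X Y Z W = (\<lambda>p. (1/2) * psi1 g (gF g) X Y Z W p)"
definition pi2 where "pi2 g P X Y Z W = (\<lambda>p. (1/2) * psi2 g P (gF g) X Y Z W p)"
definition pi3 where "pi3 g P X Y Z W = psi1 g (\<lambda>A B. gF g A (PF P B)) X Y Z W"

end

theory Submission
  imports Defs
begin

text \<open>Write \<open>D~ = \<nabla> + Q\<close> with \<open>Q(y,z) = \<onequarter>(\<theta>(z) P y - g(y, P z) \<Omega>)\<close>. Then \<open>R~ = R + C\<close>,
  where \<open>C\<close> is built from \<open>Q\<close> and \<open>\<nabla>Q\<close>; the \<open>\<W>\<^sub>1\<close> condition expresses \<open>\<nabla>P\<close> through \<open>\<theta>\<close>, so \<open>C\<close>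
  involves only \<open>g\<close>, \<open>P\<close>, \<open>\<Omega>\<close> and \<open>\<nabla>\<Omega>\<close>.

  At a point take an orthonormal frame \<open>e\<^sub>1, e\<^sub>2\<close> of the \<open>(+1)\<close>-eigenspace and \<open>e\<^sub>3, e\<^sub>4\<close> of the
  \<open>(-1)\<close>-eigenspace of \<open>P\<close>; both are planes because \<open>tr P = 0\<close>. A Riemannian \<open>P\<close>-tensor vanishes
  as soon as one of its argument pairs mixes the two eigenspaces, so \<open>R~\<close> is determined by
  \<open>a = R~(e\<^sub>1,e\<^sub>2,e\<^sub>1,e\<^sub>2)\<close> and \<open>b = R~(e\<^sub>3,e\<^sub>4,e\<^sub>3,e\<^sub>4)\<close>: \<open>R~ = -(a+b)/4 (\<pi>\<^sub>1+\<pi>\<^sub>2) + (b-a)/4 \<pi>\<^sub>3\<close>.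
  Contracting \<open>R = R~ - C\<close> expresses \<open>\<tau>\<close> and \<open>\<tau>*\<close> linearly in \<open>a\<close>, \<open>b\<close>, \<open>\<delta>\<close>, \<open>div \<Omega>\<close>,
  \<open>\<theta>(\<Omega>)\<close> and \<open>\<theta>(P\<Omega>)\<close>; eliminating \<open>a\<close> and \<open>b\<close> gives the formula.\<close>

section \<open>Smooth maps on open sets\<close>

lemma has_derivative_frechet_derivative_on:
  assumes "open U" "p \<in> U" "f differentiable_on U"
  shows "(f has_derivative frechet_derivative f (at p)) (at p)"
  using assms differentiable_on_eq_differentiable_at frechet_derivative_works by blast

lemma frechet_derivative_eq_on:
  assumes "open U" "p \<in> U" "(f has_derivative D) (at p)"
  shows "frechet_derivative f (at p) = D"
  using assms frechet_derivative_at by metis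

lemma Ck_cong:
  assumes "open U" "\<And>x. x \<in> U \<Longrightarrow> f x = h x" "Ck k U f"
  shows "Ck k U h"
  using assms(2,3)
proof (induction k arbitrary: f h)
  case 0 thus ?case using continuous_on_cong by force
next
  case (Suc k)
  have d: "f differentiable_on U" and c: "\<And>v. Ck k U (\<lambda>p. frechet_derivative f (at p) v)"
    using Suc.prems by auto
  have "h differentiable_on U"
    unfolding differentiable_on_eq_differentiable_at[OF assms(1)] differentiable_def
  proof
    fix p assume p: "p \<in> U"
    show "\<exists>D. (h has_derivative D) (at p)"
      using has_derivative_transform_within_open[OF has_derivative_frechet_derivative_on[OF assms(1) p d] assms(1) p] Suc.prems(1) by blast
  qed
  moreover have "Ck k U (\<lambda>p. frechet_derivative h (at p) v)" for v
  proof (rule Suc.IH[OF _ c[of v]])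
    fix x assume "x \<in> U"
    thus "frechet_derivative f (at x) v = frechet_derivative h (at x) v"
      using frechet_derivative_transform_within_open[of f x U h] d assms(1) Suc.prems(1)
        differentiable_on_eq_differentiable_at by metis
  qed
  ultimately show ?case by simp
qed

lemma Ck_SucD: "Ck (Suc k) U f \<Longrightarrow> Ck k U f"
proof (induction k arbitrary: f)
  case 0 thus ?case using differentiable_imp_continuous_on by auto
next
  case (Suc k) thus ?case by auto
qed

lemma Ck_const: "open U \<Longrightarrow> Ck k U (\<lambda>x. c)"
proof (induction k arbitrary: c)
  case 0 thus ?case by simp
next
  case (Suc k) thus ?case by simp
qed

lemma Ck_linear:
  assumes "open U" "bounded_linear L" "Ck k U f"
  shows "Ck k U (\<lambda>x. L (f x))"
  using assms(3)
proof (induction k arbitrary: f)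
  case 0 thus ?case using assms(2) bounded_linear.continuous_on by (auto intro: continuous_on_compose2[OF linear_continuous_on[OF assms(2)]])
next
  case (Suc k)
  have d: "f differentiable_on U" and c: "\<And>v. Ck k U (\<lambda>p. frechet_derivative f (at p) v)"
    using Suc.prems by auto
  have hd: "((\<lambda>x. L (f x)) has_derivative (\<lambda>v. L (frechet_derivative f (at p) v))) (at p)" if "p \<in> U" for p
    using bounded_linear.has_derivative[OF assms(2) has_derivative_frechet_derivative_on[OF assms(1) that d]] .
  have "(\<lambda>x. L (f x)) differentiable_on U"
    using hd assms(1) differentiable_on_eq_differentiable_at differentiable_def by blast
  moreover have "Ck k U (\<lambda>p. frechet_derivative (\<lambda>x. L (f x)) (at p) v)" for v
    by (rule Ck_cong[OF assms(1) _ Suc.IH[OF c[of v]]]) (simp add: frechet_derivative_eq_on[OF assms(1) _ hd])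
  ultimately show ?case by simp
qed

lemma Ck_add:
  assumes "open U" "Ck k U f" "Ck k U h"
  shows "Ck k U (\<lambda>x. f x + h x)"
  using assms(2,3)
proof (induction k arbitrary: f h)
  case 0 thus ?case by (auto intro: continuous_on_add)
next
  case (Suc k)
  have d: "f differentiable_on U" and c: "\<And>v. Ck k U (\<lambda>p. frechet_derivative f (at p) v)"
    using Suc.prems by auto
  have d2: "h differentiable_on U" and c2: "\<And>v. Ck k U (\<lambda>p. frechet_derivative h (at p) v)"
    using Suc.prems by auto
  have hd: "((\<lambda>x. f x + h x) has_derivative
      (\<lambda>v. frechet_derivative f (at p) v + frechet_derivative h (at p) v)) (at p)"
    if "p \<in> U" for p
    using has_derivative_add[OF has_derivative_frechet_derivative_on[OF assms(1) that d] has_derivative_frechet_derivative_on[OF assms(1) that d2]] .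
  have "(\<lambda>x. f x + h x) differentiable_on U"
    using hd assms(1) differentiable_on_eq_differentiable_at differentiable_def by blast
  moreover have "Ck k U (\<lambda>p. frechet_derivative (\<lambda>x. f x + h x) (at p) v)" for v
    by (rule Ck_cong[OF assms(1) _ Suc.IH[OF c[of v] c2[of v]]]) (simp add: frechet_derivative_eq_on[OF assms(1) _ hd])
  ultimately show ?case by simp
qed

lemma Ck_bilinear:
  fixes prod :: "'b::real_normed_vector \<Rightarrow> 'c::real_normed_vector \<Rightarrow> 'd::real_normed_vector"
    and f :: "'a::real_normed_vector \<Rightarrow> 'b" and h :: "'a \<Rightarrow> 'c"
  assumes "open U" "bounded_bilinear prod" "Ck k U f" "Ck k U h"
  shows "Ck k U (\<lambda>x. prod (f x) (h x))"
  using assms(3,4)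
proof (induction k arbitrary: f h)
  case 0 thus ?case
    using bounded_bilinear.continuous_on[OF assms(2)] by auto
next
  case (Suc k)
  have d: "f differentiable_on U" and c: "\<And>v. Ck k U (\<lambda>p. frechet_derivative f (at p) v)"
    using Suc.prems by auto
  have d2: "h differentiable_on U" and c2: "\<And>v. Ck k U (\<lambda>p. frechet_derivative h (at p) v)"
    using Suc.prems by auto
  have hd: "((\<lambda>x. prod (f x) (h x)) has_derivative
      (\<lambda>v. prod (f p) (frechet_derivative h (at p) v) + prod (frechet_derivative f (at p) v) (h p))) (at p)"
    if "p \<in> U" for p
    using bounded_bilinear.FDERIV[OF assms(2) has_derivative_frechet_derivative_on[OF assms(1) that d] has_derivative_frechet_derivative_on[OF assms(1) that d2]] .
  have "(\<lambda>x. prod (f x) (h x)) differentiable_on U"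
    using hd assms(1) differentiable_on_eq_differentiable_at differentiable_def by blast
  moreover have "Ck k U (\<lambda>p. frechet_derivative (\<lambda>x. prod (f x) (h x)) (at p) v)" for v
  proof -
    have f0: "Ck k U f" "Ck k U h" using Suc.prems Ck_SucD by blast+
    have "Ck k U (\<lambda>p. prod (f p) (frechet_derivative h (at p) v) + prod (frechet_derivative f (at p) v) (h p))"
    proof -
      have a: "Ck k U (\<lambda>p. prod (f p) (frechet_derivative h (at p) v))" using Suc.IH[OF f0(1) c2] .
      have b: "Ck k U (\<lambda>p. prod (frechet_derivative f (at p) v) (h p))" using Suc.IH[OF c f0(2)] .
      show ?thesis using Ck_add[OF assms(1) a b] .
    qed
    note X = this
    show ?thesis
      by (rule Ck_cong[OF assms(1) _ X]) (simp add: frechet_derivative_eq_on[OF assms(1) _ hd])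
  qed
  ultimately show ?case by simp
qed

lemma Ck_inverse:
  fixes f :: "'a::real_normed_vector \<Rightarrow> real"
  assumes "open U" "Ck k U f" "\<forall>x\<in>U. f x \<noteq> 0"
  shows "Ck k U (\<lambda>x. inverse (f x))"
  using assms(2,3)
proof (induction k arbitrary: f)
  case 0 thus ?case by (auto intro: continuous_on_inverse)
next
  case (Suc k)
  have d: "f differentiable_on U" and c: "\<And>v. Ck k U (\<lambda>p. frechet_derivative f (at p) v)"
    using Suc.prems by auto
  have hd: "((\<lambda>x. inverse (f x)) has_derivative
      (\<lambda>v. - (inverse (f p) * frechet_derivative f (at p) v * inverse (f p)))) (at p)"
    if "p \<in> U" for p
    using Deriv.has_derivative_inverse[OF _ has_derivative_frechet_derivative_on[OF assms(1) that d]] Suc.prems(2) that by blast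
  have "(\<lambda>x. inverse (f x)) differentiable_on U"
    using hd assms(1) differentiable_on_eq_differentiable_at differentiable_def by blast
  moreover have "Ck k U (\<lambda>p. frechet_derivative (\<lambda>x. inverse (f x)) (at p) v)" for v
  proof -
    have i: "Ck k U (\<lambda>x. inverse (f x))" using Suc.IH[OF Ck_SucD[OF Suc.prems(1)] Suc.prems(2)] .
    have a: "Ck k U (\<lambda>p. inverse (f p) * frechet_derivative f (at p) v)"
      using Ck_bilinear[OF assms(1) bounded_bilinear_mult i c] .
    have b: "Ck k U (\<lambda>p. (inverse (f p) * frechet_derivative f (at p) v) * inverse (f p))"
      using Ck_bilinear[OF assms(1) bounded_bilinear_mult a i] .
    have X: "Ck k U (\<lambda>p. - (inverse (f p) * frechet_derivative f (at p) v * inverse (f p)))"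
      using Ck_linear[OF assms(1) bounded_linear_minus[OF bounded_linear_ident] b] .
    show ?thesis
      by (rule Ck_cong[OF assms(1) _ X]) (simp add: frechet_derivative_eq_on[OF assms(1) _ hd])
  qed
  ultimately show ?case by simp
qed

lemma smooth_cong:
  "open U \<Longrightarrow> (\<And>x. x \<in> U \<Longrightarrow> f x = h x) \<Longrightarrow> smooth_on' U f \<Longrightarrow> smooth_on' U h"
  unfolding smooth_on'_def using Ck_cong by blast
lemma smooth_const: "open U \<Longrightarrow> smooth_on' U (\<lambda>x. c)"
  unfolding smooth_on'_def using Ck_const by blast
lemma smooth_add:
  "open U \<Longrightarrow> smooth_on' U f \<Longrightarrow> smooth_on' U h \<Longrightarrow> smooth_on' U (\<lambda>x. f x + h x)"
  unfolding smooth_on'_def using Ck_add by blast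
lemma smooth_linear:
  "open U \<Longrightarrow> bounded_linear L \<Longrightarrow> smooth_on' U f \<Longrightarrow> smooth_on' U (\<lambda>x. L (f x))"
  unfolding smooth_on'_def using Ck_linear by blast
lemma smooth_bilinear:
  fixes prod :: "'b::real_normed_vector \<Rightarrow> 'c::real_normed_vector \<Rightarrow> 'd::real_normed_vector"
    and f :: "'a::real_normed_vector \<Rightarrow> 'b" and h :: "'a \<Rightarrow> 'c"
  shows "open U \<Longrightarrow> bounded_bilinear prod \<Longrightarrow> smooth_on' U f \<Longrightarrow> smooth_on' U h \<Longrightarrow> smooth_on' U (\<lambda>x. prod (f x) (h x))"
  unfolding smooth_on'_def using Ck_bilinear by blast
lemma smooth_inverse:
  fixes f :: "'a::real_normed_vector \<Rightarrow> real"
  shows "open U \<Longrightarrow> smooth_on' U f \<Longrightarrow> \<forall>x\<in>U. f x \<noteq> 0 \<Longrightarrow> smooth_on' U (\<lambda>x. inverse (f x))"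
  unfolding smooth_on'_def using Ck_inverse by blast
lemma smooth_frechet_derivative: "smooth_on' U f \<Longrightarrow> smooth_on' U (\<lambda>p. frechet_derivative f (at p) v)"
  unfolding smooth_on'_def by (metis Ck.simps(2))
lemma smooth_differentiable_on: "smooth_on' U f \<Longrightarrow> f differentiable_on U"
  unfolding smooth_on'_def by (metis Ck.simps(2))

lemma smooth_scaleR:
  "open U \<Longrightarrow> smooth_on' U f \<Longrightarrow> smooth_on' U h \<Longrightarrow> smooth_on' U (\<lambda>x. f x *\<^sub>R h x)"
  using smooth_bilinear[OF _ bounded_bilinear_scaleR] by blast
lemma smooth_mult:
  "open U \<Longrightarrow> smooth_on' U (f::_\<Rightarrow>real) \<Longrightarrow> smooth_on' U h \<Longrightarrow> smooth_on' U (\<lambda>x. f x * h x)"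
  using smooth_bilinear[OF _ bounded_bilinear_mult] by blast
lemma smooth_inner: "open U \<Longrightarrow> smooth_on' U f \<Longrightarrow> smooth_on' U (\<lambda>x. f x \<bullet> b)"
  using smooth_linear[OF _ bounded_linear_inner_left] by blast
lemma smooth_uminus: "open U \<Longrightarrow> smooth_on' U f \<Longrightarrow> smooth_on' U (\<lambda>x. - f x)"
  using smooth_linear[OF _ bounded_linear_minus[OF bounded_linear_ident]] by blast
lemma smooth_diff:
  "open U \<Longrightarrow> smooth_on' U f \<Longrightarrow> smooth_on' U h \<Longrightarrow> smooth_on' U (\<lambda>x. f x - h x)"
  using smooth_add[OF _ _ smooth_uminus[of U h]] by simp
lemma smooth_sum:
  "open U \<Longrightarrow> (\<And>i. i \<in> S \<Longrightarrow> smooth_on' U (f i)) \<Longrightarrow> smooth_on' U (\<lambda>x. \<Sum>i\<in>S. f i x)"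
proof (induction S rule: infinite_finite_induct)
  case (infinite A) thus ?case by (simp add: smooth_const)
next
  case empty thus ?case by (simp add: smooth_const)
next
  case (insert x F) thus ?case by (simp add: smooth_add)
qed

section \<open>Multilinear algebra\<close>

lemma bilinear_basis_expansion:
  fixes B :: "'a::euclidean_space \<Rightarrow> 'a \<Rightarrow> real"
  assumes "bilinear B"
  shows "B x y = (\<Sum>a\<in>Basis. \<Sum>b\<in>Basis. (x \<bullet> a) * (y \<bullet> b) * B a b)"
proof -
  have "B x y = B (\<Sum>a\<in>Basis. (x \<bullet> a) *\<^sub>R a) (\<Sum>b\<in>Basis. (y \<bullet> b) *\<^sub>R b)"
    by (simp add: euclidean_representation)
  also have "\<dots> = (\<Sum>(a,b)\<in>Basis \<times> Basis. B ((x \<bullet> a) *\<^sub>R a) ((y \<bullet> b) *\<^sub>R b))"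
    by (rule bilinear_sum[OF assms])
  also have "\<dots> = (\<Sum>a\<in>Basis. \<Sum>b\<in>Basis. (x \<bullet> a) * (y \<bullet> b) * B a b)"
    by (simp add: sum.cartesian_product bilinear_lmul[OF assms] bilinear_rmul[OF assms] mult_ac)
  finally show ?thesis .
qed

lemma linear_basis_expansion:
  fixes L :: "'a::euclidean_space \<Rightarrow> 'b::real_vector"
  assumes "linear L"
  shows "L x = (\<Sum>a\<in>Basis. (x \<bullet> a) *\<^sub>R L a)"
proof -
  have "L x = L (\<Sum>a\<in>Basis. (x \<bullet> a) *\<^sub>R a)" by (simp add: euclidean_representation)
  also have "\<dots> = (\<Sum>a\<in>Basis. (x \<bullet> a) *\<^sub>R L a)"
    using assms by (simp add: linear_sum linear_scale)
  finally show ?thesis .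
qed

definition multilinear4 :: "('a::real_vector \<Rightarrow> 'a \<Rightarrow> 'a \<Rightarrow> 'a \<Rightarrow> real) \<Rightarrow> bool" where
  "multilinear4 k = ((\<forall>y z w. linear (\<lambda>x. k x y z w)) \<and> (\<forall>x z w. linear (\<lambda>y. k x y z w)) \<and>
            (\<forall>x y w. linear (\<lambda>z. k x y z w)) \<and> (\<forall>x y z. linear (\<lambda>w. k x y z w)))"

lemma multilinear4_add1[simp]: "multilinear4 k \<Longrightarrow> k (x + x') y z w = k x y z w + k x' y z w"
  unfolding multilinear4_def using linear_add by blast
lemma multilinear4_add2[simp]: "multilinear4 k \<Longrightarrow> k x (y + y') z w = k x y z w + k x y' z w"
  unfolding multilinear4_def using linear_add[of "\<lambda>y. k x y z w"] by blast
lemma multilinear4_add3[simp]: "multilinear4 k \<Longrightarrow> k x y (z + z') w = k x y z w + k x y z' w"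
  unfolding multilinear4_def using linear_add[of "\<lambda>z. k x y z w"] by blast
lemma multilinear4_add4[simp]: "multilinear4 k \<Longrightarrow> k x y z (w + w') = k x y z w + k x y z w'"
  unfolding multilinear4_def using linear_add[of "\<lambda>w. k x y z w"] by blast
lemma multilinear4_scale1[simp]: "multilinear4 k \<Longrightarrow> k (c *\<^sub>R x) y z w = c * k x y z w"
  unfolding multilinear4_def using linear_scale[of "\<lambda>x. k x y z w"] by fastforce
lemma multilinear4_scale2[simp]: "multilinear4 k \<Longrightarrow> k x (c *\<^sub>R y) z w = c * k x y z w"
  unfolding multilinear4_def using linear_scale[of "\<lambda>y. k x y z w"] by fastforce
lemma multilinear4_scale3[simp]: "multilinear4 k \<Longrightarrow> k x y (c *\<^sub>R z) w = c * k x y z w"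
  unfolding multilinear4_def using linear_scale[of "\<lambda>z. k x y z w"] by fastforce
lemma multilinear4_scale4[simp]: "multilinear4 k \<Longrightarrow> k x y z (c *\<^sub>R w) = c * k x y z w"
  unfolding multilinear4_def using linear_scale[of "\<lambda>w. k x y z w"] by fastforce
lemma multilinear4_neg3[simp]: "multilinear4 k \<Longrightarrow> k x y (- z) w = - k x y z w"
  using multilinear4_scale3[of k x y "-1" z w] by simp
lemma multilinear4_neg4[simp]: "multilinear4 k \<Longrightarrow> k x y z (- w) = - k x y z w"
  using multilinear4_scale4[of k x y z "-1" w] by simp
lemma multilinear4_neg1[simp]: "multilinear4 k \<Longrightarrow> k (- x) y z w = - k x y z w"
  using multilinear4_scale1[of k "-1" x y z w] by simp
lemma multilinear4_neg2[simp]: "multilinear4 k \<Longrightarrow> k x (- y) z w = - k x y z w"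
  using multilinear4_scale2[of k x "-1" y z w] by simp

definition frame_contraction :: "'a list \<Rightarrow> ('a \<Rightarrow> 'a \<Rightarrow> 'a \<Rightarrow> 'a \<Rightarrow> real) \<Rightarrow> real" where
  "frame_contraction fs F = (\<Sum>i\<leftarrow>fs. \<Sum>k\<leftarrow>fs. F k i i k)"

lemma multilinear4_diff:
  "multilinear4 F \<Longrightarrow> multilinear4 G \<Longrightarrow> multilinear4 (\<lambda>x y z w. F x y z w - G x y z w)"
  unfolding multilinear4_def by (auto intro: linear_compose_sub)

definition psi1_form :: "('a \<Rightarrow> 'a \<Rightarrow> real) \<Rightarrow> ('a \<Rightarrow> 'a \<Rightarrow> real) \<Rightarrow> 'a \<Rightarrow> 'a \<Rightarrow> 'a \<Rightarrow> 'a \<Rightarrow> real" where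
  "psi1_form G S x y z w = G y z * S x w - G x z * S y w + S y z * G x w - S x z * G y w"

lemma length_2_conv: "length xs = 2 \<Longrightarrow> \<exists>a b. xs = [a, b]"
  by (cases xs; cases "tl xs") auto

lemma linear_sum_list: "linear L \<Longrightarrow> L (sum_list (map h fs)) = sum_list (map (\<lambda>f. L (h f)) fs)"
  by (induction fs) (simp_all add: linear_add linear_0)

lemma sum_sum_list_swap: "(\<Sum>i\<in>S. sum_list (map (h i) fs)) = sum_list (map (\<lambda>f. \<Sum>i\<in>S. h i f) fs)"
  by (induction fs) (simp_all add: sum.distrib)

definition algebraic_curvature_form :: "('a \<Rightarrow> 'a \<Rightarrow> 'a \<Rightarrow> 'a \<Rightarrow> real) \<Rightarrow> bool" where
  "algebraic_curvature_form k =
    ((\<forall>x y z w. k x y z w = - k y x z w) \<and> (\<forall>x y z w. k x y z w = - k x y w z) \<and>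
     (\<forall>x y z w. k x y z w + k y z x w + k z x y w = 0))"

definition P_curvature_form :: "('a \<Rightarrow> 'a) \<Rightarrow> ('a \<Rightarrow> 'a \<Rightarrow> 'a \<Rightarrow> 'a \<Rightarrow> real) \<Rightarrow> bool" where
  "P_curvature_form Q k = (algebraic_curvature_form k \<and> (\<forall>x y z w. k x y (Q z) (Q w) = k x y z w))"

lemma algebraic_curvature_form_pair_sym:
  assumes "algebraic_curvature_form k"
  shows "k x y z w = k z w x y"
proof -
  have a1: "\<And>x y z w. k x y z w = - k y x z w" and a2: "\<And>x y z w. k x y z w = - k x y w z"
    and b: "\<And>x y z w. k x y z w + k y z x w + k z x y w = 0" using assms unfolding algebraic_curvature_form_def by blast+
  have "k x y z w + k y z x w + k z x y w = 0" "k y z w x + k z w y x + k w y z x = 0"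
    "k z w x y + k w x z y + k x z w y = 0" "k w x y z + k x y w z + k y w x z = 0" using b by blast+
  moreover have "k y z w x = - k y z x w" "k z w y x = - k z w x y" "k w y z x = - k w y x z"
    "k w x z y = - k x w z y" "k x z w y = - k x z y w" "k x y w z = - k x y z w" "k y w x z = - k w y x z"
    "k w x y z = - k x w y z" "k z x y w = - k x z y w" "k x w z y = - k x w y z"
    using a1 a2 by metis+
  ultimately show ?thesis by linarith
qed

section \<open>Vector fields and the Levi-Civita connection\<close>

locale w1_manifold =
  fixes U :: "'a::euclidean_space set"
    and g :: "'a \<Rightarrow> 'a \<Rightarrow> 'a \<Rightarrow> real"
    and P :: "'a \<Rightarrow> 'a \<Rightarrow> 'a"
    and nabla :: "('a \<Rightarrow> 'a) \<Rightarrow> ('a \<Rightarrow> 'a) \<Rightarrow> ('a \<Rightarrow> 'a)"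
  assumes rapm: "rapm U g P" and lc: "is_LC U g nabla" and w1: "is_W1 U g P nabla"
begin

lemma open_U: "open U" using rapm by (simp add: rapm_def)
lemma DIM_eq_4: "DIM('a) = 4" using rapm by (simp add: rapm_def)
lemma bilinear_g: "p \<in> U \<Longrightarrow> bilinear (g p)" using rapm by (simp add: rapm_def)
lemma g_sym: "p \<in> U \<Longrightarrow> g p u v = g p v u" using rapm by (simp add: rapm_def)
lemma g_pos: "p \<in> U \<Longrightarrow> u \<noteq> 0 \<Longrightarrow> g p u u > 0" using rapm by (simp add: rapm_def)
lemma linear_P: "p \<in> U \<Longrightarrow> linear (P p)" using rapm by (simp add: rapm_def)
lemma P_P[simp]: "p \<in> U \<Longrightarrow> P p (P p u) = u" using rapm by (simp add: rapm_def)
lemma g_P_P[simp]: "p \<in> U \<Longrightarrow> g p (P p u) (P p v) = g p u v" using rapm by (simp add: rapm_def)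
lemma trace_P_zero: "p \<in> U \<Longrightarrow> (\<Sum>b\<in>Basis. P p b \<bullet> b) = 0" using rapm by (simp add: rapm_def)
lemma smooth_g: "smooth_on' U (\<lambda>p. g p u v)" using rapm by (simp add: rapm_def)
lemma smooth_P: "smooth_on' U (\<lambda>p. P p u)" using rapm by (simp add: rapm_def)

lemma g_add1[simp]: "p \<in> U \<Longrightarrow> g p (x + y) z = g p x z + g p y z" using bilinear_g bilinear_ladd by blast
lemma g_add2[simp]: "p \<in> U \<Longrightarrow> g p z (x + y) = g p z x + g p z y" using bilinear_g bilinear_radd by blast
lemma g_diff1[simp]: "p \<in> U \<Longrightarrow> g p (x - y) z = g p x z - g p y z" using bilinear_g bilinear_lsub by blast
lemma g_diff2[simp]: "p \<in> U \<Longrightarrow> g p z (x - y) = g p z x - g p z y" using bilinear_g bilinear_rsub by blast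
lemma g_neg1[simp]: "p \<in> U \<Longrightarrow> g p (- x) z = - g p x z" using bilinear_g bilinear_lneg by blast
lemma g_neg2[simp]: "p \<in> U \<Longrightarrow> g p z (- x) = - g p z x" using bilinear_g bilinear_rneg by blast
lemma g_scale1[simp]: "p \<in> U \<Longrightarrow> g p (c *\<^sub>R x) z = c * g p x z" using bilinear_g bilinear_lmul by fastforce
lemma g_scale2[simp]: "p \<in> U \<Longrightarrow> g p z (c *\<^sub>R x) = c * g p z x" using bilinear_g bilinear_rmul by fastforce
lemma g_zero1[simp]: "p \<in> U \<Longrightarrow> g p 0 z = 0" using bilinear_g bilinear_lzero by blast
lemma g_zero2[simp]: "p \<in> U \<Longrightarrow> g p z 0 = 0" using bilinear_g bilinear_rzero by blast
lemma g_sum1: "p \<in> U \<Longrightarrow> g p (\<Sum>i\<in>S. f i) z = (\<Sum>i\<in>S. g p (f i) z)"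
  using bilinear_g[of p] unfolding bilinear_def by (simp add: linear_sum[where f="\<lambda>x. g p x z"])
lemma g_sum2: "p \<in> U \<Longrightarrow> g p z (\<Sum>i\<in>S. f i) = (\<Sum>i\<in>S. g p z (f i))"
  using bilinear_g[of p] unfolding bilinear_def by (simp add: linear_sum[where f="\<lambda>x. g p z x"])

lemma linear_g_left: "p \<in> U \<Longrightarrow> linear (\<lambda>x. g p x y)"
  using bilinear_g by (simp add: bilinear_def)
lemma linear_g_right: "p \<in> U \<Longrightarrow> linear (g p x)"
  using bilinear_g by (simp add: bilinear_def)

lemma P_add[simp]: "p \<in> U \<Longrightarrow> P p (x + y) = P p x + P p y" using linear_P linear_add by blast
lemma P_diff[simp]: "p \<in> U \<Longrightarrow> P p (x - y) = P p x - P p y" using linear_P linear_diff by blast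
lemma P_neg[simp]: "p \<in> U \<Longrightarrow> P p (- x) = - P p x" using linear_P linear_neg by blast
lemma P_scale[simp]: "p \<in> U \<Longrightarrow> P p (c *\<^sub>R x) = c *\<^sub>R P p x" using linear_P linear_scale by blast
lemma P_zero[simp]: "p \<in> U \<Longrightarrow> P p 0 = 0" using linear_P linear_0 by blast

lemma g_P_swap: "p \<in> U \<Longrightarrow> g p (P p x) y = g p x (P p y)"
  using g_P_P[of p x "P p y"] by simp

lemma linear_g_right_P: "p \<in> U \<Longrightarrow> linear (\<lambda>v. g p x (P p v))"
  using linear_compose[OF linear_P linear_g_right] by (simp add: o_def)

lemma g_nondegenerate: "p \<in> U \<Longrightarrow> (\<And>w. g p u w = g p v w) \<Longrightarrow> u = v"
proof (rule ccontr)
  assume p: "p \<in> U" and h: "\<And>w. g p u w = g p v w" and "u \<noteq> v"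
  hence "g p (u - v) (u - v) > 0" using g_pos[OF p, of "u - v"] by simp
  moreover have "g p (u - v) (u - v) = 0" using h[of "u - v"] p by simp
  ultimately show False by linarith
qed

lemma vf_iff: "X \<in> vf U \<longleftrightarrow> smooth_on' U X" by (simp add: vf_def)
lemma vf_cf[simp]: "cf u \<in> vf U" by (simp add: vf_def cf_def smooth_const open_U)
lemma vf_add: "X \<in> vf U \<Longrightarrow> Y \<in> vf U \<Longrightarrow> (\<lambda>q. X q + Y q) \<in> vf U"
  by (simp add: vf_def smooth_add open_U)
lemma vf_diff: "X \<in> vf U \<Longrightarrow> Y \<in> vf U \<Longrightarrow> (\<lambda>q. X q - Y q) \<in> vf U"
  by (simp add: vf_def smooth_diff open_U)
lemma vf_scale: "smooth_on' U f \<Longrightarrow> Y \<in> vf U \<Longrightarrow> (\<lambda>q. f q *\<^sub>R Y q) \<in> vf U"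
  by (simp add: vf_def smooth_scaleR open_U)
lemma vf_sum: "(\<And>i. i \<in> S \<Longrightarrow> X i \<in> vf U) \<Longrightarrow> (\<lambda>q. \<Sum>i\<in>S. X i q) \<in> vf U"
  by (simp add: vf_def smooth_sum open_U)
lemma vf_cong: "X \<in> vf U \<Longrightarrow> (\<And>q. q \<in> U \<Longrightarrow> X q = Y q) \<Longrightarrow> Y \<in> vf U"
  using smooth_cong[OF open_U] by (simp add: vf_def) blast
lemma smooth_component: "X \<in> vf U \<Longrightarrow> smooth_on' U (\<lambda>q. X q \<bullet> b)"
  by (simp add: vf_def smooth_inner open_U)

lemma vf_basis_expansion: "X = (\<lambda>q. \<Sum>b\<in>Basis. (X q \<bullet> b) *\<^sub>R cf b q)"
  by (simp add: cf_def euclidean_representation)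

lemma smooth_gF: assumes "X \<in> vf U" "Y \<in> vf U" shows "smooth_on' U (gF g X Y)"
proof -
  have "smooth_on' U (\<lambda>q. \<Sum>a\<in>Basis. \<Sum>b\<in>Basis. (X q \<bullet> a) * (Y q \<bullet> b) * g q a b)"
    by (intro smooth_sum smooth_mult smooth_component assms open_U smooth_g)
  thus ?thesis
    by (rule smooth_cong[OF open_U, rotated]) (simp add: gF_def bilinear_basis_expansion[OF bilinear_g, symmetric])
qed

lemma vf_PF: assumes "X \<in> vf U" shows "PF P X \<in> vf U"
proof -
  have "(\<lambda>q. \<Sum>a\<in>Basis. (X q \<bullet> a) *\<^sub>R P q a) \<in> vf U"
    by (intro vf_sum vf_scale smooth_component assms) (simp add: vf_def smooth_P)
  thus ?thesis
    by (rule vf_cong) (simp add: PF_def linear_basis_expansion[OF linear_P, symmetric])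
qed

lemma linear_frechet_derivative_on: "smooth_on' U f \<Longrightarrow> p \<in> U \<Longrightarrow> linear (frechet_derivative f (at p))"
  using smooth_differentiable_on open_U differentiable_on_eq_differentiable_at linear_frechet_derivative by blast

lemma has_derivative_frechet_on:
  "smooth_on' U f \<Longrightarrow> p \<in> U \<Longrightarrow> (f has_derivative frechet_derivative f (at p)) (at p)"
  using smooth_differentiable_on has_derivative_frechet_derivative_on open_U by blast

lemma smooth_ddir:
  fixes f :: "'a \<Rightarrow> 'b::real_normed_vector"
  assumes "X \<in> vf U" "smooth_on' U f" shows "smooth_on' U (ddir X f)"
proof -
  have "smooth_on' U (\<lambda>q. \<Sum>a\<in>Basis. (X q \<bullet> a) *\<^sub>R frechet_derivative f (at q) a)"
    by (intro smooth_sum smooth_scaleR smooth_component assms open_U smooth_frechet_derivative)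
  thus ?thesis
    by (rule smooth_cong[OF open_U, rotated]) (simp add: ddir_def linear_basis_expansion[OF linear_frechet_derivative_on[OF assms(2)], symmetric])
qed

lemma vf_lie: "X \<in> vf U \<Longrightarrow> Y \<in> vf U \<Longrightarrow> lie X Y \<in> vf U"
  unfolding lie_def vf_iff by (intro smooth_diff[OF open_U] smooth_ddir) (auto simp: vf_iff)

lemma ddir_cong:
  "smooth_on' U f \<Longrightarrow> p \<in> U \<Longrightarrow> (\<And>q. q \<in> U \<Longrightarrow> f q = h q) \<Longrightarrow> ddir X f p = ddir X h p"
  unfolding ddir_def using frechet_derivative_transform_within_open[of f p U h] open_U
    smooth_differentiable_on differentiable_on_eq_differentiable_at by metis

lemma ddir_add:
  "smooth_on' U f \<Longrightarrow> smooth_on' U h \<Longrightarrow> p \<in> U \<Longrightarrow> ddir X (\<lambda>q. f q + h q) p = ddir X f p + ddir X h p"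
proof -
  assume a: "smooth_on' U f" "smooth_on' U h" "p \<in> U"
  have "frechet_derivative (\<lambda>q. f q + h q) (at p) = (\<lambda>v. frechet_derivative f (at p) v + frechet_derivative h (at p) v)"
    by (rule frechet_derivative_eq_on[OF open_U a(3) has_derivative_add[OF has_derivative_frechet_on[OF a(1,3)] has_derivative_frechet_on[OF a(2,3)]]])
  thus ?thesis by (simp add: ddir_def)
qed

lemma ddir_scale:
  fixes f :: "'a \<Rightarrow> real"
  shows "smooth_on' U f \<Longrightarrow> smooth_on' U h \<Longrightarrow> p \<in> U \<Longrightarrow>
    ddir X (\<lambda>q. f q *\<^sub>R h q) p = ddir X f p *\<^sub>R h p + f p *\<^sub>R ddir X h p"
proof -
  assume a: "smooth_on' U f" "smooth_on' U h" "p \<in> U"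
  have "frechet_derivative (\<lambda>q. f q *\<^sub>R h q) (at p) = (\<lambda>v. f p *\<^sub>R frechet_derivative h (at p) v + frechet_derivative f (at p) v *\<^sub>R h p)"
    by (rule frechet_derivative_eq_on[OF open_U a(3) has_derivative_scaleR[OF has_derivative_frechet_on[OF a(1,3)] has_derivative_frechet_on[OF a(2,3)]]])
  thus ?thesis by (simp add: ddir_def)
qed

lemma ddir_mult:
  fixes f :: "'a \<Rightarrow> real"
  shows "smooth_on' U f \<Longrightarrow> smooth_on' U h \<Longrightarrow> p \<in> U \<Longrightarrow>
    ddir X (\<lambda>q. f q * h q) p = ddir X f p * h p + f p * ddir X h p"
  using ddir_scale[of f h p X] by simp

lemma ddir_const[simp]: "ddir X (\<lambda>q. c) p = 0"
  by (simp add: ddir_def)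

lemma ddir_add_dir:
  "smooth_on' U f \<Longrightarrow> p \<in> U \<Longrightarrow> ddir (\<lambda>q. X q + Y q) f p = ddir X f p + ddir Y f p"
  unfolding ddir_def using linear_frechet_derivative_on linear_add by blast

lemma ddir_scale_dir:
  "smooth_on' U f \<Longrightarrow> p \<in> U \<Longrightarrow> ddir (\<lambda>q. c q *\<^sub>R X q) f p = c p *\<^sub>R ddir X f p"
  unfolding ddir_def using linear_frechet_derivative_on linear_scale by blast

lemma lie_add_left:
  "X \<in> vf U \<Longrightarrow> Y \<in> vf U \<Longrightarrow> Z \<in> vf U \<Longrightarrow> p \<in> U \<Longrightarrow>
   lie (\<lambda>q. X q + Y q) Z p = lie X Z p + lie Y Z p"
  unfolding lie_def using ddir_add_dir[of Z p X Y] ddir_add[of X Y p Z] by (simp add: vf_iff)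

lemma lie_scale_left:
  "smooth_on' U f \<Longrightarrow> X \<in> vf U \<Longrightarrow> Y \<in> vf U \<Longrightarrow> p \<in> U \<Longrightarrow>
   lie (\<lambda>q. f q *\<^sub>R X q) Y p = f p *\<^sub>R lie X Y p - ddir Y f p *\<^sub>R X p"
  unfolding lie_def using ddir_scale_dir[of Y p f X] ddir_scale[of f X p Y]
  by (simp add: vf_iff algebra_simps)

lemma vf_nabla: "X \<in> vf U \<Longrightarrow> Y \<in> vf U \<Longrightarrow> nabla X Y \<in> vf U"
  using lc by (simp add: is_LC_def)

lemma LC_axioms: assumes "X \<in> vf U" "Y \<in> vf U" "Z \<in> vf U" "smooth_on' U f" "p \<in> U"
  shows "nabla (\<lambda>q. X q + Y q) Z p = nabla X Z p + nabla Y Z p \<and>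
        nabla (\<lambda>q. f q *\<^sub>R X q) Z p = f p *\<^sub>R nabla X Z p \<and>
        nabla X (\<lambda>q. Y q + Z q) p = nabla X Y p + nabla X Z p \<and>
        nabla X (\<lambda>q. f q *\<^sub>R Y q) p = ddir X f p *\<^sub>R Y p + f p *\<^sub>R nabla X Y p \<and>
        nabla X Y p - nabla Y X p = lie X Y p \<and>
        ddir X (gF g Y Z) p = gF g (nabla X Y) Z p + gF g Y (nabla X Z) p"
  using lc assms unfolding is_LC_def by blast

lemma smooth_const_U: "smooth_on' U (\<lambda>q. c)" by (rule smooth_const[OF open_U])

lemma nabla_add_left:
  "X \<in> vf U \<Longrightarrow> Y \<in> vf U \<Longrightarrow> Z \<in> vf U \<Longrightarrow> p \<in> U \<Longrightarrow>
  nabla (\<lambda>q. X q + Y q) Z p = nabla X Z p + nabla Y Z p"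
  using LC_axioms[OF _ _ _ smooth_const_U] by blast
lemma nabla_scale_left:
  "X \<in> vf U \<Longrightarrow> Z \<in> vf U \<Longrightarrow> smooth_on' U f \<Longrightarrow> p \<in> U \<Longrightarrow>
  nabla (\<lambda>q. f q *\<^sub>R X q) Z p = f p *\<^sub>R nabla X Z p"
  using LC_axioms[of X X Z f p] by blast
lemma nabla_add_right:
  "X \<in> vf U \<Longrightarrow> Y \<in> vf U \<Longrightarrow> Z \<in> vf U \<Longrightarrow> p \<in> U \<Longrightarrow>
  nabla X (\<lambda>q. Y q + Z q) p = nabla X Y p + nabla X Z p"
  using LC_axioms[OF _ _ _ smooth_const_U] by blast
lemma nabla_scale_right:
  "X \<in> vf U \<Longrightarrow> Y \<in> vf U \<Longrightarrow> smooth_on' U f \<Longrightarrow> p \<in> U \<Longrightarrow>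
  nabla X (\<lambda>q. f q *\<^sub>R Y q) p = ddir X f p *\<^sub>R Y p + f p *\<^sub>R nabla X Y p"
  using LC_axioms[of X Y Y f p] by blast
lemma nabla_torsion_free: "X \<in> vf U \<Longrightarrow> Y \<in> vf U \<Longrightarrow> p \<in> U \<Longrightarrow>
  nabla X Y p - nabla Y X p = lie X Y p"
  using LC_axioms[OF _ _ _ smooth_const_U] by blast
lemma nabla_metric:
  "X \<in> vf U \<Longrightarrow> Y \<in> vf U \<Longrightarrow> Z \<in> vf U \<Longrightarrow> p \<in> U \<Longrightarrow>
  ddir X (gF g Y Z) p = g p (nabla X Y p) (Z p) + g p (Y p) (nabla X Z p)"
  using LC_axioms[OF _ _ _ smooth_const_U] by (simp add: gF_def)

text \<open>The connection axioms only involve multipliers that are smooth on \<open>U\<close>. The indicator of the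
  complement of \<open>U\<close> is one (it vanishes on \<open>U\<close>), and multiplying by it shows that \<open>\<nabla>\<close> is local.\<close>
definition outside_U :: "'a \<Rightarrow> real" where "outside_U q = (if q \<in> U then 0 else 1)"

lemma smooth_outside_U: "smooth_on' U outside_U"
  by (rule smooth_cong[OF open_U _ smooth_const_U[of 0]]) (simp add: outside_U_def)

lemma nabla_local_left: assumes "X \<in> vf U" "X' \<in> vf U" "Z \<in> vf U" "p \<in> U" "\<And>q. q \<in> U \<Longrightarrow> X q = X' q"
  shows "nabla X Z p = nabla X' Z p"
proof -
  define D where "D = (\<lambda>q. X q - X' q)"
  have D: "D \<in> vf U" using vf_diff assms by (simp add: D_def)
  have XD: "X = (\<lambda>q. X' q + D q)" by (simp add: D_def)
  have D_eq: "D = (\<lambda>q. outside_U q *\<^sub>R D q)" using assms(5) by (auto simp: D_def outside_U_def)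
  have "nabla D Z p = nabla (\<lambda>q. outside_U q *\<^sub>R D q) Z p"
    using D_eq by (rule arg_cong[where f="\<lambda>x. nabla x Z p"])
  also have "\<dots> = 0"
    using nabla_scale_left[OF D assms(3) smooth_outside_U assms(4)] assms(4) by (simp add: outside_U_def)
  finally have "nabla D Z p = 0" .
  thus ?thesis using nabla_add_left[OF assms(2) D assms(3,4)] XD by simp
qed

lemma nabla_local_right: assumes "X \<in> vf U" "Y \<in> vf U" "Y' \<in> vf U" "p \<in> U" "\<And>q. q \<in> U \<Longrightarrow> Y q = Y' q"
  shows "nabla X Y p = nabla X Y' p"
proof -
  define D where "D = (\<lambda>q. Y q - Y' q)"
  have D: "D \<in> vf U" using vf_diff assms by (simp add: D_def)
  have XD: "Y = (\<lambda>q. Y' q + D q)" by (simp add: D_def)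
  have D_eq: "D = (\<lambda>q. outside_U q *\<^sub>R D q)" using assms(5) by (auto simp: D_def outside_U_def)
  have "nabla X D p = nabla X (\<lambda>q. outside_U q *\<^sub>R D q) p"
    using D_eq by (rule arg_cong[where f="\<lambda>x. nabla X x p"])
  also have "\<dots> = 0"
    using nabla_scale_right[OF assms(1) D smooth_outside_U assms(4)] assms(4,5) by (simp add: outside_U_def D_def)
  finally have "nabla X D p = 0" .
  thus ?thesis using nabla_add_right[OF assms(1) assms(3) D assms(4)] XD by simp
qed

lemma nabla_sum_left: assumes "finite S" "\<And>i. i \<in> S \<Longrightarrow> X i \<in> vf U" "Z \<in> vf U" "p \<in> U"
  shows "nabla (\<lambda>q. \<Sum>i\<in>S. X i q) Z p = (\<Sum>i\<in>S. nabla (X i) Z p)"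
  using assms(1,2)
proof (induction S rule: finite_induct)
  case empty
  have "nabla (\<lambda>q. (\<lambda>q. 0::real) q *\<^sub>R Z q) Z p = (\<lambda>q. 0::real) p *\<^sub>R nabla Z Z p"
    by (rule nabla_scale_left[OF assms(3) assms(3) smooth_const_U assms(4)])
  thus ?case by simp
next
  case (insert x F)
  have "nabla (\<lambda>q. \<Sum>i\<in>insert x F. X i q) Z p = nabla (\<lambda>q. X x q + (\<Sum>i\<in>F. X i q)) Z p"
    using insert by simp
  also have "\<dots> = nabla (X x) Z p + nabla (\<lambda>q. \<Sum>i\<in>F. X i q) Z p"
    by (rule nabla_add_left) (use insert assms vf_sum[of F X] in auto)
  finally show ?case using insert by simp
qed

lemma nabla_basis_expansion: assumes "X \<in> vf U" "Z \<in> vf U" "p \<in> U"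
  shows "nabla X Z p = (\<Sum>b\<in>Basis. (X p \<bullet> b) *\<^sub>R nabla (cf b) Z p)"
proof -
  have "nabla X Z p = nabla (\<lambda>q. \<Sum>b\<in>Basis. (X q \<bullet> b) *\<^sub>R cf b q) Z p"
    using vf_basis_expansion[of X] by simp
  also have "\<dots> = (\<Sum>b\<in>Basis. nabla (\<lambda>q. (X q \<bullet> b) *\<^sub>R cf b q) Z p)"
    by (rule nabla_sum_left) (auto intro: vf_scale[OF smooth_component[OF assms(1)] vf_cf] assms)
  also have "\<dots> = (\<Sum>b\<in>Basis. (X p \<bullet> b) *\<^sub>R nabla (cf b) Z p)"
    by (rule sum.cong) (auto intro!: nabla_scale_left smooth_component assms)
  finally show ?thesis .
qed

section \<open>The 1-form \<open>\<theta>\<close> and the vector field \<open>\<Omega>\<close>\<close>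

definition theta_dual :: "'a \<Rightarrow> 'a" where
  "theta_dual p = (\<Sum>i\<in>Basis. \<Sum>j\<in>Basis. ginv g p i j *\<^sub>R (nabla (cf i) (PF P (cf j)) p - P p (nabla (cf i) (cf j) p)))"

lemma theta_eq_theta_dual: "p \<in> U \<Longrightarrow> theta g P nabla Z p = g p (theta_dual p) (Z p)"
  by (simp add: theta_def theta_dual_def Ften_def gF_def g_sum1)

lemma Omega_eq_theta_dual: assumes "p \<in> U" shows "Omega g P nabla p = theta_dual p"
proof -
  have "(THE v. \<forall>u. g p v u = theta g P nabla (cf u) p) = theta_dual p"
  proof (rule the_equality)
    show "\<forall>u. g p (theta_dual p) u = theta g P nabla (cf u) p" using theta_eq_theta_dual[OF assms] by (simp add: cf_def)
    fix v assume "\<forall>u. g p v u = theta g P nabla (cf u) p"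
    thus "v = theta_dual p" using theta_eq_theta_dual[OF assms] g_nondegenerate[OF assms] by (simp add: cf_def)
  qed
  thus ?thesis by (simp add: Omega_def)
qed

abbreviation "Om \<equiv> Omega g P nabla"
abbreviation "th \<equiv> theta g P nabla"

lemma theta_eq_g_Omega: "p \<in> U \<Longrightarrow> th Z p = g p (Om p) (Z p)"
  by (simp add: theta_eq_theta_dual Omega_eq_theta_dual)

definition nablaP :: "'a \<Rightarrow> 'a \<Rightarrow> 'a \<Rightarrow> 'a" where
  "nablaP p x y = (1/4) *\<^sub>R (g p x y *\<^sub>R Om p - g p x (P p y) *\<^sub>R P p (Om p)
      + g p (Om p) y *\<^sub>R x - g p (Om p) (P p y) *\<^sub>R P p x)"

lemma nabla_P_eq: assumes "X \<in> vf U" "Y \<in> vf U" "p \<in> U"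
  shows "nabla X (PF P Y) p - P p (nabla X Y p) = nablaP p (X p) (Y p)"
proof (rule g_nondegenerate[OF assms(3)])
  fix w
  have "Ften g P nabla X Y (cf w) p = (1/4) *
       (gF g X Y p * th (cf w) p - gF g X (PF P Y) p * th (PF P (cf w)) p
        + gF g X (cf w) p * th Y p - gF g X (PF P (cf w)) p * th (PF P Y) p)"
    using w1 assms by (simp add: is_W1_def)
  hence e: "g p (nabla X (PF P Y) p - P p (nabla X Y p)) w = (1/4) * (g p (X p) (Y p) * g p (Om p) w
     - g p (X p) (P p (Y p)) * g p (Om p) (P p w) + g p (X p) w * g p (Om p) (Y p)
     - g p (X p) (P p w) * g p (Om p) (P p (Y p)))"
    using assms(3) by (simp only: Ften_def gF_def theta_eq_g_Omega PF_def cf_def)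
  have r: "g p (nablaP p (X p) (Y p)) w = (1/4) * (g p (X p) (Y p) * g p (Om p) w
     - g p (X p) (P p (Y p)) * g p (P p (Om p)) w + g p (Om p) (Y p) * g p (X p) w
     - g p (Om p) (P p (Y p)) * g p (P p (X p)) w)"
    using assms(3) by (simp add: nablaP_def algebra_simps)
  show "g p (nabla X (PF P Y) p - P p (nabla X Y p)) w = g p (nablaP p (X p) (Y p)) w"
    unfolding e r using assms(3) by (simp add: g_P_swap algebra_simps)
qed

lemma nablaP_diag_eigen:
  assumes p: "p \<in> U" and x: "P p x = s *\<^sub>R x" and s: "s * s = 1"
  shows "nablaP p x x = (1/4 * g p x x) *\<^sub>R (Om p - s *\<^sub>R P p (Om p))"
proof -
  have "g p (Om p) (P p x) *\<^sub>R P p x = g p (Om p) x *\<^sub>R x"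
    using p s by (simp add: x mult.assoc[symmetric])
  thus ?thesis using p by (simp add: nablaP_def x algebra_simps)
qed
lemma g_nonneg: "p \<in> U \<Longrightarrow> g p u u \<ge> 0"
  using g_pos[of p u] by (cases "u = 0") auto

lemma g_zero_iff: "p \<in> U \<Longrightarrow> g p u u = 0 \<longleftrightarrow> u = 0"
  using g_pos[of p u] by (cases "u = 0") auto

text \<open>Since \<open>tr P = 0\<close>, neither \<open>P = id\<close> nor \<open>P = -id\<close>.\<close>
lemma sum_g_eigen_nonzero:
  assumes q: "q \<in> U" and s: "s * s = 1"
  shows "(\<Sum>b\<in>Basis. g q (b + s *\<^sub>R P q b) (b + s *\<^sub>R P q b)) \<noteq> 0"
proof
  assume "(\<Sum>b\<in>Basis. g q (b + s *\<^sub>R P q b) (b + s *\<^sub>R P q b)) = 0"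
  hence "b + s *\<^sub>R P q b = 0" if "b \<in> Basis" for b
    using that by (subst (asm) sum_nonneg_eq_0_iff) (auto simp: g_nonneg[OF q] g_zero_iff[OF q])
  have "P q b = (- s) *\<^sub>R b" if "b \<in> Basis" for b
  proof -
    have "b = - (s *\<^sub>R P q b)" using \<open>b \<in> Basis\<close> \<open>\<And>b. b \<in> Basis \<Longrightarrow> b + s *\<^sub>R P q b = 0\<close>
      by (simp add: eq_neg_iff_add_eq_0)
    hence "(- s) *\<^sub>R b = (- s) *\<^sub>R (- (s *\<^sub>R P q b))" by (rule arg_cong)
    also have "\<dots> = P q b" using s by simp
    finally show ?thesis by simp
  qed
  hence "(\<Sum>b\<in>Basis. P q b \<bullet> b) = (\<Sum>b\<in>(Basis::'a set). - s)" by (auto intro: sum.cong)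
  thus False using trace_P_zero[OF q] DIM_eq_4 s by auto
qed

text \<open>\<open>\<Omega>\<close> is only given pointwise (by \<open>THE\<close>); to see that it is smooth we solve for it in the
  \<open>\<W>\<^sub>1\<close> identity along the smooth fields \<open>e \<plusminus> P e\<close>, which yields \<open>\<Omega> \<minusplus> P\<Omega>\<close> as smooth
  multiples of covariant derivatives.\<close>
lemma vf_Omega: "Om \<in> vf U"
proof -
  define E where "E s b = (\<lambda>q. cf b q + s *\<^sub>R PF P (cf b) q)" for s :: real and b
  define N where "N s q = (\<Sum>b\<in>Basis. gF g (E s b) (E s b) q)" for s q
  define V where "V s q = (\<Sum>b\<in>Basis. nabla (E s b) (PF P (E s b)) q - PF P (nabla (E s b) (E s b)) q)"
    for s q
  have E: "E s b \<in> vf U" for s b unfolding E_def by (intro vf_add vf_scale smooth_const_U vf_PF vf_cf)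
  have N: "smooth_on' U (N s)" for s unfolding N_def by (intro smooth_sum open_U smooth_gF E)
  have V: "V s \<in> vf U" for s unfolding V_def by (intro vf_sum vf_diff vf_PF vf_nabla E)
  have N_nz: "N s q \<noteq> 0" if "q \<in> U" "s * s = 1" for s q
    using sum_g_eigen_nonzero[OF that] by (simp add: N_def gF_def E_def PF_def cf_def)
  have V_eq: "V s q = (1/4 * N s q) *\<^sub>R (Om q - s *\<^sub>R P q (Om q))" if q: "q \<in> U" and s: "s * s = 1" for s q
  proof -
    have "nabla (E s b) (PF P (E s b)) q - PF P (nabla (E s b) (E s b)) q
        = (1/4 * gF g (E s b) (E s b) q) *\<^sub>R (Om q - s *\<^sub>R P q (Om q))" for b
    proof -
      have "P q (E s b q) = s *\<^sub>R E s b q"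
        using q s by (simp add: E_def PF_def cf_def algebra_simps)
      thus ?thesis using nabla_P_eq[OF E E q] nablaP_diag_eigen[OF q _ s] by (simp add: PF_def gF_def)
    qed
    thus ?thesis by (simp add: V_def N_def scaleR_sum_left sum_divide_distrib)
  qed
  define F where "F q = (2 * inverse (N 1 q)) *\<^sub>R V 1 q + (2 * inverse (N (-1) q)) *\<^sub>R V (-1) q" for q
  have "F \<in> vf U" unfolding F_def
    by (intro vf_add vf_scale smooth_mult smooth_const_U smooth_inverse open_U N V ballI N_nz) simp_all
  moreover have "F q = Om q" if q: "q \<in> U" for q
  proof -
    have "F q = (1/2) *\<^sub>R (Om q - P q (Om q)) + (1/2) *\<^sub>R (Om q + P q (Om q))"
      using N_nz[OF q] by (simp add: F_def V_eq[OF q])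
    also have "\<dots> = Om q" by (simp add: scaleR_add_right scaleR_diff_right flip: scaleR_add_left)
    finally show ?thesis .
  qed
  ultimately show ?thesis by (rule vf_cong)
qed

lemma smooth_theta: "Z \<in> vf U \<Longrightarrow> smooth_on' U (th Z)"
  by (rule smooth_cong[OF open_U _ smooth_gF[OF vf_Omega]]) (simp_all add: gF_def theta_eq_g_Omega)

section \<open>The natural connection \<open>D~\<close>\<close>

abbreviation "Dt \<equiv> Dtil g P nabla"

definition Dtil_diff :: "'a \<Rightarrow> 'a \<Rightarrow> 'a \<Rightarrow> 'a" where
  "Dtil_diff p y z = (1/4) *\<^sub>R (g p (Om p) z *\<^sub>R P p y - g p y (P p z) *\<^sub>R Om p)"

lemma Dtil_diff_add1[simp]: "p \<in> U \<Longrightarrow> Dtil_diff p (x + y) z = Dtil_diff p x z + Dtil_diff p y z"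
  by (simp add: Dtil_diff_def algebra_simps)
lemma Dtil_diff_add2[simp]: "p \<in> U \<Longrightarrow> Dtil_diff p z (x + y) = Dtil_diff p z x + Dtil_diff p z y"
  by (simp add: Dtil_diff_def algebra_simps)
lemma Dtil_diff_diff1[simp]: "p \<in> U \<Longrightarrow> Dtil_diff p (x - y) z = Dtil_diff p x z - Dtil_diff p y z"
  by (simp add: Dtil_diff_def algebra_simps)
lemma Dtil_diff_diff2[simp]: "p \<in> U \<Longrightarrow> Dtil_diff p z (x - y) = Dtil_diff p z x - Dtil_diff p z y"
  by (simp add: Dtil_diff_def algebra_simps)
lemma Dtil_diff_scale1[simp]: "p \<in> U \<Longrightarrow> Dtil_diff p (c *\<^sub>R x) z = c *\<^sub>R Dtil_diff p x z"
  by (simp add: Dtil_diff_def algebra_simps)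
lemma Dtil_diff_scale2[simp]: "p \<in> U \<Longrightarrow> Dtil_diff p z (c *\<^sub>R x) = c *\<^sub>R Dtil_diff p z x"
  by (simp add: Dtil_diff_def algebra_simps)

lemma Dtil_eq: "p \<in> U \<Longrightarrow> Dt Y Z p = nabla Y Z p + Dtil_diff p (Y p) (Z p)"
  by (simp add: Dtil_def Dtil_diff_def theta_eq_g_Omega)

lemma Dtil_explicit: "Dt Y Z = (\<lambda>q. nabla Y Z q + ((\<lambda>q. 1/4 * th Z q) q *\<^sub>R PF P Y q
      + (\<lambda>q. -1/4 * gF g Y (PF P Z) q) q *\<^sub>R Om q))"
  by (rule ext) (simp add: Dtil_def PF_def gF_def algebra_simps)

lemma vf_Dtil: assumes "Y \<in> vf U" "Z \<in> vf U" shows "Dt Y Z \<in> vf U"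
  unfolding Dtil_explicit
  by (intro vf_add vf_scale vf_nabla assms smooth_mult smooth_const_U smooth_theta smooth_gF vf_PF vf_Omega open_U)

lemma Dtil_add_left:
  "X \<in> vf U \<Longrightarrow> Y \<in> vf U \<Longrightarrow> Z \<in> vf U \<Longrightarrow> p \<in> U \<Longrightarrow>
  Dt (\<lambda>q. X q + Y q) Z p = Dt X Z p + Dt Y Z p"
  by (simp add: Dtil_eq nabla_add_left)
lemma Dtil_scale_left:
  "X \<in> vf U \<Longrightarrow> Z \<in> vf U \<Longrightarrow> smooth_on' U f \<Longrightarrow> p \<in> U \<Longrightarrow>
  Dt (\<lambda>q. f q *\<^sub>R X q) Z p = f p *\<^sub>R Dt X Z p"
  by (simp add: Dtil_eq nabla_scale_left scaleR_add_right)
lemma Dtil_add_right: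
  "X \<in> vf U \<Longrightarrow> Y \<in> vf U \<Longrightarrow> Z \<in> vf U \<Longrightarrow> p \<in> U \<Longrightarrow>
  Dt X (\<lambda>q. Y q + Z q) p = Dt X Y p + Dt X Z p"
  by (simp add: Dtil_eq nabla_add_right)
lemma Dtil_scale_right:
  "X \<in> vf U \<Longrightarrow> Y \<in> vf U \<Longrightarrow> smooth_on' U f \<Longrightarrow> p \<in> U \<Longrightarrow>
  Dt X (\<lambda>q. f q *\<^sub>R Y q) p = ddir X f p *\<^sub>R Y p + f p *\<^sub>R Dt X Y p"
  by (simp add: Dtil_eq nabla_scale_right scaleR_add_right)
lemma Dtil_local_left:
  "X \<in> vf U \<Longrightarrow> X' \<in> vf U \<Longrightarrow> Z \<in> vf U \<Longrightarrow> p \<in> U \<Longrightarrow> (\<And>q. q \<in> U \<Longrightarrow> X q = X' q) \<Longrightarrow>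
  Dt X Z p = Dt X' Z p"
  by (simp add: Dtil_eq nabla_local_left[of X X' Z p])
lemma Dtil_local_right:
  "X \<in> vf U \<Longrightarrow> Y \<in> vf U \<Longrightarrow> Y' \<in> vf U \<Longrightarrow> p \<in> U \<Longrightarrow> (\<And>q. q \<in> U \<Longrightarrow> Y q = Y' q) \<Longrightarrow>
  Dt X Y p = Dt X Y' p"
  by (simp add: Dtil_eq nabla_local_right[of X Y Y' p])

lemma curv_Dtil_scale_left: assumes X: "X \<in> vf U" and Y: "Y \<in> vf U" and Z: "Z \<in> vf U"
  and f: "smooth_on' U f" and p: "p \<in> U"
  shows "curv Dt (\<lambda>q. f q *\<^sub>R X q) Y Z p = f p *\<^sub>R curv Dt X Y Z p"
proof -
  have fX: "(\<lambda>q. f q *\<^sub>R X q) \<in> vf U" by (rule vf_scale[OF f X])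
  have A: "Dt (\<lambda>q. f q *\<^sub>R X q) (Dt Y Z) p = f p *\<^sub>R Dt X (Dt Y Z) p"
    by (rule Dtil_scale_left[OF X vf_Dtil[OF Y Z] f p])
  have "Dt Y (Dt (\<lambda>q. f q *\<^sub>R X q) Z) p = Dt Y (\<lambda>q. f q *\<^sub>R Dt X Z q) p"
    by (rule Dtil_local_right[OF Y vf_Dtil[OF fX Z] vf_scale[OF f vf_Dtil[OF X Z]] p]) (simp add: Dtil_scale_left[OF X Z f])
  also have "\<dots> = ddir Y f p *\<^sub>R Dt X Z p + f p *\<^sub>R Dt Y (Dt X Z) p"
    by (rule Dtil_scale_right[OF Y vf_Dtil[OF X Z] f p])
  finally have B: "Dt Y (Dt (\<lambda>q. f q *\<^sub>R X q) Z) p = ddir Y f p *\<^sub>R Dt X Z p + f p *\<^sub>R Dt Y (Dt X Z) p" .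
  have sf: "smooth_on' U (\<lambda>q. - ddir Y f q)" by (intro smooth_uminus open_U smooth_ddir Y f)
  have L1: "(\<lambda>q. f q *\<^sub>R lie X Y q) \<in> vf U" by (intro vf_scale f vf_lie X Y)
  have L2: "(\<lambda>q. (- ddir Y f q) *\<^sub>R X q) \<in> vf U" by (intro vf_scale sf X)
  have "Dt (lie (\<lambda>q. f q *\<^sub>R X q) Y) Z p = Dt (\<lambda>q. f q *\<^sub>R lie X Y q + (- ddir Y f q) *\<^sub>R X q) Z p"
    by (rule Dtil_local_left[OF vf_lie[OF fX Y] vf_add[OF L1 L2] Z p]) (simp add: lie_scale_left[OF f X Y])
  also have "\<dots> = f p *\<^sub>R Dt (lie X Y) Z p + (- ddir Y f p) *\<^sub>R Dt X Z p"
    using Dtil_add_left[OF L1 L2 Z p] Dtil_scale_left[OF vf_lie[OF X Y] Z f p] Dtil_scale_left[OF X Z sf p] by simp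
  finally have C: "Dt (lie (\<lambda>q. f q *\<^sub>R X q) Y) Z p = f p *\<^sub>R Dt (lie X Y) Z p + (- ddir Y f p) *\<^sub>R Dt X Z p" .
  show ?thesis unfolding curv_def A B C by (simp add: algebra_simps)
qed

lemma curv_Dtil_add_left: assumes X1: "X1 \<in> vf U" and X2: "X2 \<in> vf U" and Y: "Y \<in> vf U" and Z: "Z \<in> vf U"
  and p: "p \<in> U"
  shows "curv Dt (\<lambda>q. X1 q + X2 q) Y Z p = curv Dt X1 Y Z p + curv Dt X2 Y Z p"
proof -
  have X: "(\<lambda>q. X1 q + X2 q) \<in> vf U" by (rule vf_add[OF X1 X2])
  have A: "Dt (\<lambda>q. X1 q + X2 q) (Dt Y Z) p = Dt X1 (Dt Y Z) p + Dt X2 (Dt Y Z) p"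
    by (rule Dtil_add_left[OF X1 X2 vf_Dtil[OF Y Z] p])
  have "Dt Y (Dt (\<lambda>q. X1 q + X2 q) Z) p = Dt Y (\<lambda>q. Dt X1 Z q + Dt X2 Z q) p"
    by (rule Dtil_local_right[OF Y vf_Dtil[OF X Z] vf_add[OF vf_Dtil[OF X1 Z] vf_Dtil[OF X2 Z]] p]) (simp add: Dtil_add_left[OF X1 X2 Z])
  also have "\<dots> = Dt Y (Dt X1 Z) p + Dt Y (Dt X2 Z) p"
    by (rule Dtil_add_right[OF Y vf_Dtil[OF X1 Z] vf_Dtil[OF X2 Z] p])
  finally have B: "Dt Y (Dt (\<lambda>q. X1 q + X2 q) Z) p = Dt Y (Dt X1 Z) p + Dt Y (Dt X2 Z) p" .
  have "Dt (lie (\<lambda>q. X1 q + X2 q) Y) Z p = Dt (\<lambda>q. lie X1 Y q + lie X2 Y q) Z p"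
    by (rule Dtil_local_left[OF vf_lie[OF X Y] vf_add[OF vf_lie[OF X1 Y] vf_lie[OF X2 Y]] Z p]) (simp add: lie_add_left[OF X1 X2 Y])
  also have "\<dots> = Dt (lie X1 Y) Z p + Dt (lie X2 Y) Z p"
    by (rule Dtil_add_left[OF vf_lie[OF X1 Y] vf_lie[OF X2 Y] Z p])
  finally have C: "Dt (lie (\<lambda>q. X1 q + X2 q) Y) Z p = Dt (lie X1 Y) Z p + Dt (lie X2 Y) Z p" .
  show ?thesis unfolding curv_def A B C by (simp add: algebra_simps)
qed

lemma curv_Dtil_zero_left: assumes Y: "Y \<in> vf U" and Z: "Z \<in> vf U" and p: "p \<in> U"
  shows "curv Dt (\<lambda>q. 0) Y Z p = 0"
proof -
  have "curv Dt (\<lambda>q. (\<lambda>q. 0::real) q *\<^sub>R Y q) Y Z p = (\<lambda>q. 0::real) p *\<^sub>R curv Dt Y Y Z p"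
    by (rule curv_Dtil_scale_left[OF Y Y Z smooth_const_U p])
  thus ?thesis by simp
qed

lemma curv_Dtil_sum_left: assumes "finite S" "\<And>i. i \<in> S \<Longrightarrow> X i \<in> vf U" "Y \<in> vf U" "Z \<in> vf U" "p \<in> U"
  shows "curv Dt (\<lambda>q. \<Sum>i\<in>S. X i q) Y Z p = (\<Sum>i\<in>S. curv Dt (X i) Y Z p)"
  using assms(1,2)
proof (induction S rule: finite_induct)
  case empty thus ?case using curv_Dtil_zero_left[OF assms(3,4,5)] by simp
next
  case (insert x F)
  have "curv Dt (\<lambda>q. \<Sum>i\<in>insert x F. X i q) Y Z p = curv Dt (\<lambda>q. X x q + (\<Sum>i\<in>F. X i q)) Y Z p"
    using insert by simp
  also have "\<dots> = curv Dt (X x) Y Z p + curv Dt (\<lambda>q. \<Sum>i\<in>F. X i q) Y Z p"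
    by (rule curv_Dtil_add_left) (use insert assms vf_sum[of F X] in auto)
  finally show ?case using insert by simp
qed

lemma curv_Dtil_basis_expansion: assumes "X \<in> vf U" "Y \<in> vf U" "Z \<in> vf U" "p \<in> U"
  shows "curv Dt X Y Z p = (\<Sum>b\<in>Basis. (X p \<bullet> b) *\<^sub>R curv Dt (cf b) Y Z p)"
proof -
  have "curv Dt X Y Z p = curv Dt (\<lambda>q. \<Sum>b\<in>Basis. (X q \<bullet> b) *\<^sub>R cf b q) Y Z p"
    using vf_basis_expansion[of X] by simp
  also have "\<dots> = (\<Sum>b\<in>Basis. curv Dt (\<lambda>q. (X q \<bullet> b) *\<^sub>R cf b q) Y Z p)"
    by (rule curv_Dtil_sum_left) (auto intro: vf_scale[OF smooth_component[OF assms(1)] vf_cf] assms)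
  also have "\<dots> = (\<Sum>b\<in>Basis. (X p \<bullet> b) *\<^sub>R curv Dt (cf b) Y Z p)"
    by (rule sum.cong) (auto intro!: curv_Dtil_scale_left smooth_component assms)
  finally show ?thesis .
qed

lemma curv4_Dtil_expand_1: assumes "X \<in> vf U" "Y \<in> vf U" "Z \<in> vf U" "p \<in> U"
  shows "curv4 g Dt X Y Z W p = (\<Sum>a\<in>Basis. (X p \<bullet> a) * curv4 g Dt (cf a) Y Z W p)"
  using assms(4) by (simp add: curv4_def gF_def curv_Dtil_basis_expansion[OF assms] g_sum1)

lemma curv4_Dtil_expand_4: assumes "p \<in> U"
  shows "curv4 g Dt X Y Z W p = (\<Sum>d\<in>Basis. (W p \<bullet> d) * curv4 g Dt X Y Z (cf d) p)"
proof -
  have "curv4 g Dt X Y Z W p = g p (curv Dt X Y Z p) (\<Sum>d\<in>Basis. (W p \<bullet> d) *\<^sub>R d)"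
    by (simp add: curv4_def gF_def euclidean_representation)
  thus ?thesis using assms by (simp add: g_sum2 curv4_def gF_def cf_def)
qed

definition nablaOmega :: "'a \<Rightarrow> 'a \<Rightarrow> 'a" where "nablaOmega p x = nabla (cf x) Om p"

lemma nablaOmega_basis_expansion:
  "p \<in> U \<Longrightarrow> nablaOmega p x = (\<Sum>b\<in>Basis. (x \<bullet> b) *\<^sub>R nablaOmega p b)"
  unfolding nablaOmega_def using nabla_basis_expansion[OF vf_cf vf_Omega] by (simp add: cf_def)

lemma nabla_Omega_eq: "X \<in> vf U \<Longrightarrow> p \<in> U \<Longrightarrow> nabla X Om p = nablaOmega p (X p)"
  using nabla_basis_expansion[OF _ vf_Omega] nablaOmega_basis_expansion by (simp add: nablaOmega_def cf_def)

lemma nablaOmega_add[simp]: "p \<in> U \<Longrightarrow> nablaOmega p (x + y) = nablaOmega p x + nablaOmega p y"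
  by (subst (1 2 3) nablaOmega_basis_expansion) (simp_all add: inner_add_left scaleR_add_left sum.distrib)
lemma nablaOmega_scale[simp]: "p \<in> U \<Longrightarrow> nablaOmega p (c *\<^sub>R x) = c *\<^sub>R nablaOmega p x"
  by (subst (1 2) nablaOmega_basis_expansion) (simp_all add: scaleR_sum_right)

lemma ddir_const_mult:
  fixes h :: "'a \<Rightarrow> real" shows "smooth_on' U h \<Longrightarrow> p \<in> U \<Longrightarrow> ddir X (\<lambda>q. c * h q) p = c * ddir X h p"
  using ddir_mult[OF smooth_const_U, of h p X c] by simp

lemma ddir_theta: "X \<in> vf U \<Longrightarrow> Z \<in> vf U \<Longrightarrow> p \<in> U \<Longrightarrow>
   ddir X (th Z) p = g p (nablaOmega p (X p)) (Z p) + g p (Om p) (nabla X Z p)"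
proof -
  assume a: "X \<in> vf U" "Z \<in> vf U" "p \<in> U"
  have "ddir X (th Z) p = ddir X (gF g Om Z) p"
    by (rule ddir_cong[OF smooth_theta[OF a(2)] a(3)]) (simp add: theta_eq_g_Omega gF_def)
  thus ?thesis using nabla_metric[OF a(1) vf_Omega a(2) a(3)] nabla_Omega_eq[OF a(1) a(3)] by simp
qed

lemma ddir_g_P: "X \<in> vf U \<Longrightarrow> Y \<in> vf U \<Longrightarrow> Z \<in> vf U \<Longrightarrow> p \<in> U \<Longrightarrow>
   ddir X (gF g Y (PF P Z)) p = g p (nabla X Y p) (P p (Z p)) + g p (Y p) (P p (nabla X Z p) + nablaP p (X p) (Z p))"
proof -
  assume a: "X \<in> vf U" "Y \<in> vf U" "Z \<in> vf U" "p \<in> U"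
  have "nabla X (PF P Z) p = P p (nabla X Z p) + nablaP p (X p) (Z p)" using nabla_P_eq[OF a(1) a(3) a(4)] by (simp add: algebra_simps)
  thus ?thesis using nabla_metric[OF a(1) a(2) vf_PF[OF a(3)] a(4)] by (simp add: PF_def)
qed

lemma Dtil_diff_field:
  "(\<lambda>q. Dtil_diff q (Y q) (Z q)) = (\<lambda>q. (1/4 * gF g Om Z q) *\<^sub>R PF P Y q + (-1/4 * gF g Y (PF P Z) q) *\<^sub>R Om q)"
  by (rule ext) (simp add: Dtil_diff_def gF_def PF_def algebra_simps)

lemma vf_Dtil_diff: "Y \<in> vf U \<Longrightarrow> Z \<in> vf U \<Longrightarrow> (\<lambda>q. Dtil_diff q (Y q) (Z q)) \<in> vf U"
  unfolding Dtil_diff_field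
  by (intro vf_add vf_scale smooth_mult smooth_const_U smooth_gF vf_PF vf_Omega open_U)

definition nabla_Dtil_diff :: "'a \<Rightarrow> 'a \<Rightarrow> 'a \<Rightarrow> 'a \<Rightarrow> 'a" where
  "nabla_Dtil_diff p x y z = (1/4) *\<^sub>R (g p (nablaOmega p x) z *\<^sub>R P p y + g p (Om p) z *\<^sub>R nablaP p x y
     - g p y (nablaP p x z) *\<^sub>R Om p - g p y (P p z) *\<^sub>R nablaOmega p x)"

lemma nabla_Dtil_diff_Leibniz:
  assumes X: "X \<in> vf U" and Y: "Y \<in> vf U" and Z: "Z \<in> vf U" and p: "p \<in> U"
  shows "nabla X (\<lambda>q. Dtil_diff q (Y q) (Z q)) p = nabla_Dtil_diff p (X p) (Y p) (Z p)
    + Dtil_diff p (nabla X Y p) (Z p) + Dtil_diff p (Y p) (nabla X Z p)"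
proof -
  define f1 where "f1 = (\<lambda>q. 1/4 * gF g Om Z q)"
  define f2 where "f2 = (\<lambda>q. -1/4 * gF g Y (PF P Z) q)"
  have f1s: "smooth_on' U f1" unfolding f1_def by (intro smooth_mult smooth_const_U smooth_gF vf_Omega Z open_U)
  have f2s: "smooth_on' U f2" unfolding f2_def by (intro smooth_mult smooth_const_U smooth_gF Y vf_PF Z open_U)
  have B1: "(\<lambda>q. f1 q *\<^sub>R PF P Y q) \<in> vf U" by (intro vf_scale f1s vf_PF Y)
  have B2: "(\<lambda>q. f2 q *\<^sub>R Om q) \<in> vf U" by (intro vf_scale f2s vf_Omega)
  have "nabla X (\<lambda>q. Dtil_diff q (Y q) (Z q)) p = nabla X (\<lambda>q. f1 q *\<^sub>R PF P Y q + f2 q *\<^sub>R Om q) p"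
    by (simp add: Dtil_diff_field f1_def f2_def)
  also have "\<dots> = nabla X (\<lambda>q. f1 q *\<^sub>R PF P Y q) p + nabla X (\<lambda>q. f2 q *\<^sub>R Om q) p"
    by (rule nabla_add_right[OF X B1 B2 p])
  also have "\<dots> = (ddir X f1 p *\<^sub>R PF P Y p + f1 p *\<^sub>R nabla X (PF P Y) p)
      + (ddir X f2 p *\<^sub>R Om p + f2 p *\<^sub>R nabla X Om p)"
    by (simp add: nabla_scale_right[OF X vf_PF[OF Y] f1s p] nabla_scale_right[OF X vf_Omega f2s p])
  finally have n: "nabla X (\<lambda>q. Dtil_diff q (Y q) (Z q)) p = \<dots>" .
  have d1: "ddir X f1 p = 1/4 * (g p (nablaOmega p (X p)) (Z p) + g p (Om p) (nabla X Z p))"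
    unfolding f1_def using ddir_const_mult[OF smooth_gF[OF vf_Omega Z] p, of X "1/4"]
      nabla_metric[OF X vf_Omega Z p] nabla_Omega_eq[OF X p] by simp
  have d2: "ddir X f2 p = -1/4 * (g p (nabla X Y p) (P p (Z p)) + g p (Y p) (P p (nabla X Z p) + nablaP p (X p) (Z p)))"
    unfolding f2_def using ddir_const_mult[OF smooth_gF[OF Y vf_PF[OF Z]] p, of X "-1/4"] ddir_g_P[OF X Y Z p]
    by simp
  have w: "nabla X (PF P Y) p = P p (nabla X Y p) + nablaP p (X p) (Y p)"
    using nabla_P_eq[OF X Y p] by (simp add: algebra_simps)
  show ?thesis unfolding n d1 d2 w nabla_Omega_eq[OF X p] using p
    by (simp add: f1_def f2_def nabla_Dtil_diff_def Dtil_diff_def gF_def PF_def algebra_simps)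
qed

lemma Dtil_Dtil_eq:
  assumes X: "X \<in> vf U" and Y: "Y \<in> vf U" and Z: "Z \<in> vf U" and p: "p \<in> U"
  shows "Dt X (Dt Y Z) p = nabla X (nabla Y Z) p + nabla_Dtil_diff p (X p) (Y p) (Z p)
    + Dtil_diff p (nabla X Y p) (Z p) + Dtil_diff p (Y p) (nabla X Z p) + Dtil_diff p (X p) (Dt Y Z p)"
proof -
  have Q: "(\<lambda>q. Dtil_diff q (Y q) (Z q)) \<in> vf U" by (rule vf_Dtil_diff[OF Y Z])
  have "nabla X (Dt Y Z) p = nabla X (\<lambda>q. nabla Y Z q + Dtil_diff q (Y q) (Z q)) p"
    by (rule nabla_local_right[OF X vf_Dtil[OF Y Z] vf_add[OF vf_nabla[OF Y Z] Q] p]) (simp add: Dtil_eq)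
  also have "\<dots> = nabla X (nabla Y Z) p + nabla X (\<lambda>q. Dtil_diff q (Y q) (Z q)) p"
    by (rule nabla_add_right[OF X vf_nabla[OF Y Z] Q p])
  finally show ?thesis using Dtil_eq[OF p, of X "Dt Y Z"] nabla_Dtil_diff_Leibniz[OF X Y Z p] by simp
qed

definition curv_diff :: "'a \<Rightarrow> 'a \<Rightarrow> 'a \<Rightarrow> 'a \<Rightarrow> 'a" where
  "curv_diff p x y z = nabla_Dtil_diff p x y z - nabla_Dtil_diff p y x z + Dtil_diff p x (Dtil_diff p y z) - Dtil_diff p y (Dtil_diff p x z)"

lemma curv_Dtil_eq: assumes X: "X \<in> vf U" and Y: "Y \<in> vf U" and Z: "Z \<in> vf U" and p: "p \<in> U"
  shows "curv Dt X Y Z p = curv nabla X Y Z p + curv_diff p (X p) (Y p) (Z p)"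
proof -
  have l: "lie X Y p = nabla X Y p - nabla Y X p" using nabla_torsion_free[OF X Y p] by simp
  have L: "Dt (lie X Y) Z p = nabla (lie X Y) Z p + Dtil_diff p (nabla X Y p - nabla Y X p) (Z p)"
    using Dtil_eq[OF p] l by simp
  show ?thesis unfolding curv_def Dtil_Dtil_eq[OF X Y Z p] Dtil_Dtil_eq[OF Y X Z p] L
    using p by (simp add: curv_diff_def Dtil_eq algebra_simps)
qed

text \<open>\<open>S1 p\<close> and \<open>S2 p\<close> are the tensors \<open>S'\<close> and \<open>S''\<close> of the statement at \<open>p\<close>, with
  \<open>(D~\<^sub>a\<theta>)(P b) = g(\<nabla>\<^sub>a\<Omega>, P b) - g(\<Omega>, Q(a, P b))\<close>.\<close>
definition S1 where "S1 p a b = 1/16 * g p (Om p) a * g p (Om p) b"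
definition S2 where "S2 p a b = -1/4 * (g p (nablaOmega p a) (P p b) - g p (Om p) (Dtil_diff p a (P p b)))
    - 1/16 * g p (Om p) (P p a) * g p (Om p) (P p b)"

definition Cform where "Cform p x y z w = (g p (Om p) (Om p) / 16) * ((1/2) * psi1_form (g p) (g p) x y (P p z) (P p w))
     + psi1_form (g p) (S1 p) x y z w + psi1_form (g p) (S2 p) x y (P p z) (P p w)"

lemma Cform_multilinear: "p \<in> U \<Longrightarrow> multilinear4 (Cform p)"
  unfolding multilinear4_def Cform_def psi1_form_def S1_def S2_def
  by (auto intro!: linearI simp: algebra_simps add_divide_distrib diff_divide_distrib)

lemma g_curv_diff_eq: assumes p: "p \<in> U"
  shows "g p (curv_diff p x y z) w = Cform p x y z w"
proof -
  let ?O = "Om p"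
  note s = g_sym[OF p, of y x] g_sym[OF p, of z x] g_sym[OF p, of w x] g_sym[OF p, of ?O x]
     g_sym[OF p, of z y] g_sym[OF p, of w y] g_sym[OF p, of ?O y] g_sym[OF p, of w z] g_sym[OF p, of ?O z] g_sym[OF p, of ?O w]
  have sp: "g p y (P p x) = g p x (P p y)" "g p z (P p x) = g p x (P p z)" "g p w (P p x) = g p x (P p w)"
    "g p ?O (P p x) = g p x (P p ?O)" "g p z (P p y) = g p y (P p z)" "g p w (P p y) = g p y (P p w)"
    "g p ?O (P p y) = g p y (P p ?O)" "g p w (P p z) = g p z (P p w)" "g p ?O (P p z) = g p z (P p ?O)"
    "g p ?O (P p w) = g p w (P p ?O)"
    using p g_P_swap g_sym by metis+
  show ?thesis using p
    unfolding curv_diff_def nabla_Dtil_diff_def Dtil_diff_def nablaP_def Cform_def psi1_form_def S1_def S2_def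
    by (simp add: g_P_swap s sp algebra_simps)
qed

section \<open>Contractions in adapted orthonormal frames\<close>

lemma linear_Gmap: "p \<in> U \<Longrightarrow> linear (Gmap g p)"
proof -
  assume p: "p \<in> U"
  show ?thesis unfolding Gmap_def
    by (intro linear_compose_sum ballI linearI) (use p in \<open>auto simp: scaleR_add_left\<close>)
qed

lemma Gmap_inner: "p \<in> U \<Longrightarrow> Gmap g p u \<bullet> v = g p u v"
proof -
  assume p: "p \<in> U"
  have "Gmap g p u \<bullet> v = (\<Sum>b\<in>Basis. g p u b * (b \<bullet> v))" by (simp add: Gmap_def inner_sum_left)
  also have "\<dots> = g p u (\<Sum>b\<in>Basis. (v \<bullet> b) *\<^sub>R b)" using p by (simp add: g_sum2 inner_commute mult.commute)
  finally show ?thesis by (simp add: euclidean_representation)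
qed

lemma inj_Gmap: "p \<in> U \<Longrightarrow> inj (Gmap g p)"
proof -
  assume p: "p \<in> U"
  have "u = v" if "Gmap g p u = Gmap g p v" for u v
    using g_nondegenerate[OF p] that Gmap_inner[OF p] by metis
  thus ?thesis by (rule injI)
qed

lemma surj_Gmap: "p \<in> U \<Longrightarrow> surj (Gmap g p)"
  using linear_injective_imp_surjective linear_Gmap inj_Gmap by blast

definition ginv_vec where "ginv_vec p i = inv (Gmap g p) i"

lemma g_ginv_vec: "p \<in> U \<Longrightarrow> g p (ginv_vec p i) v = i \<bullet> v"
  using Gmap_inner[of p "ginv_vec p i" v] surj_f_inv_f[OF surj_Gmap] by (simp add: ginv_vec_def)

lemma ginv_eq_ginv_vec: "ginv g p i j = ginv_vec p i \<bullet> j" by (simp add: ginv_def ginv_vec_def)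

lemma ginv_contract: assumes p: "p \<in> U" and B: "\<And>x. linear (B x)"
  shows "(\<Sum>i\<in>Basis. \<Sum>j\<in>Basis. ginv g p i j * B i j) = (\<Sum>i\<in>Basis. B i (ginv_vec p i))"
proof (rule sum.cong[OF refl])
  fix i
  have "B i (ginv_vec p i) = B i (\<Sum>j\<in>Basis. (ginv_vec p i \<bullet> j) *\<^sub>R j)" by (simp add: euclidean_representation)
  also have "\<dots> = (\<Sum>j\<in>Basis. (ginv_vec p i \<bullet> j) * B i j)" using B[of i] by (simp add: linear_sum linear_scale)
  finally show "(\<Sum>j\<in>Basis. ginv g p i j * B i j) = B i (ginv_vec p i)" by (simp add: ginv_eq_ginv_vec)
qed

definition orthonormal_list :: "'a \<Rightarrow> 'a list \<Rightarrow> bool" where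
  "orthonormal_list p fs = (\<forall>i<length fs. \<forall>j<length fs. g p (fs!i) (fs!j) = (if i = j then 1 else 0))"

definition frame_expands :: "'a \<Rightarrow> 'a list \<Rightarrow> 'a set \<Rightarrow> bool" where
  "frame_expands p fs S = (\<forall>v\<in>S. v = sum_list (map (\<lambda>f. g p v f *\<^sub>R f) fs))"

lemma orthonormal_list_Cons:
  assumes p: "p \<in> U" and f: "g p f f = 1" and orth: "\<forall>h\<in>set fs. g p f h = 0"
    and fs: "orthonormal_list p fs"
  shows "orthonormal_list p (f # fs)"
  unfolding orthonormal_list_def
proof (intro allI impI)
  fix i j assume "i < length (f # fs)" "j < length (f # fs)"
  moreover have "g p f (fs!k) = 0" "g p (fs!k) f = 0" if "k < length fs" for k
    using orth nth_mem[OF that] g_sym[OF p, of f "fs!k"] by auto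
  ultimately show "g p ((f # fs) ! i) ((f # fs) ! j) = (if i = j then 1 else 0)"
    using f fs by (cases i; cases j) (auto simp: orthonormal_list_def)
qed

lemma frame_expands_Cons:
  assumes p: "p \<in> U" and S: "subspace S" and f: "f \<in> S" "g p f f = 1"
    and orth: "\<forall>h\<in>set fs. g p f h = 0" and fs: "frame_expands p fs {u \<in> S. g p f u = 0}"
  shows "frame_expands p (f # fs) S"
  unfolding frame_expands_def
proof
  fix u assume u: "u \<in> S"
  define u' where "u' = u - g p u f *\<^sub>R f"
  have "u' \<in> {u \<in> S. g p f u = 0}" using u S f p g_sym[OF p, of f u] unfolding u'_def
    by (simp add: subspace_diff subspace_scale)
  hence "u' = sum_list (map (\<lambda>h. g p u' h *\<^sub>R h) fs)" using fs by (simp add: frame_expands_def)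
  moreover have "map (\<lambda>h. g p u' h *\<^sub>R h) fs = map (\<lambda>h. g p u h *\<^sub>R h) fs"
  proof (rule map_cong[OF refl])
    fix h assume "h \<in> set fs"
    thus "g p u' h *\<^sub>R h = g p u h *\<^sub>R h" using orth p by (simp add: u'_def)
  qed
  ultimately have "u' = sum_list (map (\<lambda>h. g p u h *\<^sub>R h) fs)" by simp
  thus "u = sum_list (map (\<lambda>h. g p u h *\<^sub>R h) (f # fs))" by (simp add: u'_def algebra_simps)
qed

lemma orthonormal_frame_exists:
  assumes p: "p \<in> U"
  shows "subspace S \<Longrightarrow> \<exists>fs. set fs \<subseteq> S \<and> orthonormal_list p fs \<and> frame_expands p fs S"
proof (induction "dim S" arbitrary: S rule: less_induct)
  case less
  show ?case
  proof (cases "S \<subseteq> {0}")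
    case True
    thus ?thesis by (intro exI[of _ "[]"]) (auto simp: orthonormal_list_def frame_expands_def)
  next
    case False
    then obtain v where v: "v \<in> S" "v \<noteq> 0" by auto
    define f where "f = (1 / sqrt (g p v v)) *\<^sub>R v"
    have ff: "g p f f = 1" using g_pos[OF p v(2)] p by (simp add: f_def real_sqrt_mult[symmetric])
    have fS: "f \<in> S" using less.prems v(1) by (simp add: f_def subspace_scale)
    define S' where "S' = {u \<in> S. g p f u = 0}"
    have sub': "subspace S'" using less.prems p unfolding S'_def subspace_def by auto
    have "f \<notin> S'" using ff unfolding S'_def by auto
    hence "S' \<subset> S" using fS unfolding S'_def by auto
    hence "dim S' < dim S"
      using dim_psubset span_eq_iff[THEN iffD2, OF sub'] span_eq_iff[THEN iffD2, OF less.prems] by metis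
    then obtain fs where fs: "set fs \<subseteq> S'" "orthonormal_list p fs" "frame_expands p fs S'"
      using less.hyps sub' by blast
    have orth: "\<forall>h\<in>set fs. g p f h = 0" using fs(1) unfolding S'_def by auto
    have "orthonormal_list p (f # fs)" by (rule orthonormal_list_Cons[OF p ff orth fs(2)])
    moreover have "frame_expands p (f # fs) S"
      by (rule frame_expands_Cons[OF p less.prems fS ff orth]) (use fs(3) in \<open>simp add: S'_def\<close>)
    moreover have "set (f # fs) \<subseteq> S" using fS fs(1) unfolding S'_def by auto
    ultimately show ?thesis by blast
  qed
qed

lemma ginv_trace_frame: assumes p: "p \<in> U" and sp: "frame_expands p fs UNIV"
  and B1: "\<And>y. linear (\<lambda>x. B x y)" and B2: "\<And>x. linear (B x)"
  shows "(\<Sum>i\<in>Basis. \<Sum>j\<in>Basis. ginv g p i j * B i j) = sum_list (map (\<lambda>f. B f f) fs)"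
proof -
  have w: "ginv_vec p i = sum_list (map (\<lambda>f. (f \<bullet> i) *\<^sub>R f) fs)" for i
  proof (rule g_nondegenerate[OF p])
    fix v
    have "i \<bullet> v = i \<bullet> sum_list (map (\<lambda>f. g p v f *\<^sub>R f) fs)" using sp by (simp add: frame_expands_def)
    also have "\<dots> = sum_list (map (\<lambda>f. (f \<bullet> i) * g p f v) fs)"
      by (induction fs) (simp_all add: inner_add_right g_sym[OF p] inner_commute)
    also have "\<dots> = g p (sum_list (map (\<lambda>f. (f \<bullet> i) *\<^sub>R f) fs)) v"
      using p by (induction fs) simp_all
    finally show "g p (ginv_vec p i) v = g p (sum_list (map (\<lambda>f. (f \<bullet> i) *\<^sub>R f) fs)) v"
      using g_ginv_vec[OF p] by simp
  qed
  have "(\<Sum>i\<in>Basis. \<Sum>j\<in>Basis. ginv g p i j * B i j) = (\<Sum>i\<in>Basis. B i (ginv_vec p i))"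
    by (rule ginv_contract[OF p B2])
  also have "\<dots> = (\<Sum>i\<in>Basis. sum_list (map (\<lambda>f. (f \<bullet> i) * B i f) fs))"
    unfolding w using B2 by (simp add: linear_sum_list linear_scale)
  also have "\<dots> = sum_list (map (\<lambda>f. \<Sum>i\<in>Basis. (f \<bullet> i) * B i f) fs)"
    by (rule sum_sum_list_swap)
  also have "\<dots> = sum_list (map (\<lambda>f. B f f) fs)"
  proof -
    have "(\<Sum>i\<in>Basis. (f \<bullet> i) * B i f) = B f f" for f
    proof -
      have "B f f = B (\<Sum>i\<in>Basis. (f \<bullet> i) *\<^sub>R i) f" by (simp add: euclidean_representation)
      also have "\<dots> = (\<Sum>i\<in>Basis. (f \<bullet> i) * B i f)"
        using linear_sum[OF B1[of f], of "\<lambda>i. (f \<bullet> i) *\<^sub>R i" Basis] linear_scale[OF B1[of f]] by simp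
      finally show ?thesis by simp
    qed
    thus ?thesis by simp
  qed
  finally show ?thesis .
qed

lemma orthonormal_list_unit: "orthonormal_list p fs \<Longrightarrow> f \<in> set fs \<Longrightarrow> g p f f = 1"
  unfolding orthonormal_list_def by (metis in_set_conv_nth)

lemma orthonormal_list_2:
  "orthonormal_list p [a, b] \<longleftrightarrow> g p a a = 1 \<and> g p b b = 1 \<and> g p a b = 0 \<and> g p b a = 0"
  unfolding orthonormal_list_def by (auto simp: numeral_2_eq_2 All_less_Suc)

lemma g_eigenspaces_orthogonal:
  assumes "p \<in> U" "P p u = u" "P p v = - v"
  shows "g p u v = 0"
proof -
  have "g p u v = g p (P p u) (P p v)" using assms(1) by simp
  also have "\<dots> = - g p u v" using assms by simp
  finally show ?thesis by simp
qed

lemma frame_expands_eigenspaces: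
  assumes p: "p \<in> U"
    and fp: "set fp \<subseteq> {u. P p u = u}" "frame_expands p fp {u. P p u = u}"
    and fm: "set fm \<subseteq> {u. P p u = - u}" "frame_expands p fm {u. P p u = - u}"
  shows "frame_expands p (fp @ fm) UNIV"
  unfolding frame_expands_def
proof
  fix v :: 'a
  define v1 where "v1 = (1/2) *\<^sub>R (v + P p v)"
  define v2 where "v2 = (1/2) *\<^sub>R (v - P p v)"
  have v1: "P p v1 = v1" and v2: "P p v2 = - v2" using p by (simp_all add: v1_def v2_def algebra_simps)
  have "v1 + v2 = (1/2 + 1/2) *\<^sub>R v"
    unfolding v1_def v2_def scaleR_add_right scaleR_diff_right scaleR_add_left by simp
  hence v12: "v = v1 + v2" by simp
  have m1: "map (\<lambda>f. g p v1 f *\<^sub>R f) fp = map (\<lambda>f. g p v f *\<^sub>R f) fp"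
  proof (rule map_cong[OF refl])
    fix f assume "f \<in> set fp"
    hence "g p v2 f = 0" using g_eigenspaces_orthogonal[OF p _ v2, of f] fp(1) g_sym[OF p] by auto
    thus "g p v1 f *\<^sub>R f = g p v f *\<^sub>R f" using p v12 by simp
  qed
  have m2: "map (\<lambda>f. g p v2 f *\<^sub>R f) fm = map (\<lambda>f. g p v f *\<^sub>R f) fm"
  proof (rule map_cong[OF refl])
    fix f assume "f \<in> set fm"
    hence "g p v1 f = 0" using g_eigenspaces_orthogonal[OF p v1, of f] fm(1) by auto
    thus "g p v2 f *\<^sub>R f = g p v f *\<^sub>R f" using p v12 by simp
  qed
  have "v1 = sum_list (map (\<lambda>f. g p v1 f *\<^sub>R f) fp)" using fp(2) v1 by (simp add: frame_expands_def)
  moreover have "v2 = sum_list (map (\<lambda>f. g p v2 f *\<^sub>R f) fm)" using fm(2) v2 by (simp add: frame_expands_def)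
  ultimately show "v = sum_list (map (\<lambda>f. g p v f *\<^sub>R f) (fp @ fm))"
    using v12 by (simp only: map_append sum_list_append m1 m2)
qed

lemma ginv_trace_g:
  assumes p: "p \<in> U"
  shows "(\<Sum>i\<in>Basis. \<Sum>j\<in>Basis. ginv g p i j * g p i j) = 4"
proof -
  have "(\<Sum>i\<in>Basis. \<Sum>j\<in>Basis. ginv g p i j * g p i j) = (\<Sum>i\<in>Basis. g p i (ginv_vec p i))"
    by (rule ginv_contract[OF p linear_g_right[OF p]])
  also have "\<dots> = 4" using g_ginv_vec[OF p] g_sym[OF p] DIM_eq_4 by simp
  finally show ?thesis .
qed

lemma ginv_trace_gP:
  assumes p: "p \<in> U"
  shows "(\<Sum>i\<in>Basis. \<Sum>j\<in>Basis. ginv g p i j * g p i (P p j)) = 0"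
proof -
  have "(\<Sum>i\<in>Basis. \<Sum>j\<in>Basis. ginv g p i j * g p i (P p j)) = (\<Sum>i\<in>Basis. g p i (P p (ginv_vec p i)))"
    by (rule ginv_contract[OF p linear_g_right_P[OF p]])
  also have "\<dots> = (\<Sum>i\<in>Basis. P p i \<bullet> i)"
    by (metis g_P_swap[OF p] g_sym[OF p] g_ginv_vec[OF p] inner_commute)
  finally show ?thesis using trace_P_zero[OF p] by simp
qed

text \<open>Both eigenspaces of \<open>P\<close> are 2-dimensional: tracing \<open>g\<close> and \<open>g(\<cdot>, P \<cdot>)\<close> in an orthonormal
  frame adapted to them gives \<open>m\<^sub>+ + m\<^sub>- = 4\<close> and \<open>m\<^sub>+ - m\<^sub>- = tr P = 0\<close>.\<close>
lemma eigenspace_frames_length: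
  assumes p: "p \<in> U"
    and fp: "set fp \<subseteq> {u. P p u = u}" "orthonormal_list p fp" "frame_expands p fp {u. P p u = u}"
    and fm: "set fm \<subseteq> {u. P p u = - u}" "orthonormal_list p fm" "frame_expands p fm {u. P p u = - u}"
  shows "length fp = 2" "length fm = 2"
proof -
  have fr: "frame_expands p (fp @ fm) UNIV" by (rule frame_expands_eigenspaces[OF p fp(1,3) fm(1,3)])
  have "sum_list (map (\<lambda>f. g p f f) fp) = length fp"
    using orthonormal_list_unit[OF fp(2)] by (induction fp) auto
  moreover have "sum_list (map (\<lambda>f. g p f f) fm) = length fm"
    using orthonormal_list_unit[OF fm(2)] by (induction fm) auto
  moreover have "(\<Sum>i\<in>Basis. \<Sum>j\<in>Basis. ginv g p i j * g p i j) = sum_list (map (\<lambda>f. g p f f) (fp @ fm))"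
    by (rule ginv_trace_frame[OF p fr linear_g_left[OF p] linear_g_right[OF p]])
  ultimately have "length fp + length fm = 4" using ginv_trace_g[OF p] by simp
  moreover have "sum_list (map (\<lambda>f. g p f (P p f)) fp) = length fp"
    using orthonormal_list_unit[OF fp(2)] fp(1) by (induction fp) auto
  moreover have "sum_list (map (\<lambda>f. g p f (P p f)) fm) = - real (length fm)"
    using orthonormal_list_unit[OF fm(2)] fm(1) p by (induction fm) auto
  moreover have "(\<Sum>i\<in>Basis. \<Sum>j\<in>Basis. ginv g p i j * g p i (P p j))
      = sum_list (map (\<lambda>f. g p f (P p f)) (fp @ fm))"
    by (rule ginv_trace_frame[OF p fr linear_g_left[OF p] linear_g_right_P[OF p]])
  ultimately have "real (length fp) - real (length fm) = 0" using ginv_trace_gP[OF p] by simp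
  with \<open>length fp + length fm = 4\<close> show "length fp = 2" "length fm = 2" by linarith+
qed

definition adapted_frame :: "'a \<Rightarrow> 'a \<Rightarrow> 'a \<Rightarrow> 'a \<Rightarrow> 'a \<Rightarrow> bool" where
  "adapted_frame p f1 f2 f3 f4 = (g p f1 f1 = 1 \<and> g p f2 f2 = 1 \<and> g p f3 f3 = 1 \<and> g p f4 f4 = 1 \<and>
    g p f1 f2 = 0 \<and> g p f1 f3 = 0 \<and> g p f1 f4 = 0 \<and> g p f2 f3 = 0 \<and> g p f2 f4 = 0 \<and> g p f3 f4 = 0 \<and>
    P p f1 = f1 \<and> P p f2 = f2 \<and> P p f3 = - f3 \<and> P p f4 = - f4 \<and> frame_expands p [f1, f2, f3, f4] UNIV)"

lemma adapted_frame_exists: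
  assumes p: "p \<in> U"
  shows "\<exists>f1 f2 f3 f4. adapted_frame p f1 f2 f3 f4"
proof -
  have "subspace {u. P p u = u}" "subspace {u. P p u = - u}" unfolding subspace_def using p by simp_all
  then obtain fp fm
    where fp: "set fp \<subseteq> {u. P p u = u}" "orthonormal_list p fp" "frame_expands p fp {u. P p u = u}"
      and fm: "set fm \<subseteq> {u. P p u = - u}" "orthonormal_list p fm" "frame_expands p fm {u. P p u = - u}"
    using orthonormal_frame_exists[OF p] by meson
  obtain f1 f2 f3 f4 where e: "fp = [f1, f2]" "fm = [f3, f4]"
    using eigenspace_frames_length[OF p fp fm] length_2_conv by metis
  have "frame_expands p [f1, f2, f3, f4] UNIV"
    using frame_expands_eigenspaces[OF p fp(1,3) fm(1,3)] e by simp
  moreover have "g p f1 f3 = 0" "g p f1 f4 = 0" "g p f2 f3 = 0" "g p f2 f4 = 0"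
    using fp(1) fm(1) e g_eigenspaces_orthogonal[OF p] by auto
  ultimately have "adapted_frame p f1 f2 f3 f4"
    using fp(1,2) fm(1,2) e by (simp add: adapted_frame_def orthonormal_list_2)
  thus ?thesis by blast
qed

definition wedge :: "'a \<Rightarrow> 'a \<Rightarrow> 'a \<Rightarrow> 'a \<Rightarrow> 'a \<Rightarrow> real" where
  "wedge p a b x y = g p x a * g p y b - g p x b * g p y a"

lemma P_curvature_form_adapted:
  assumes p: "p \<in> U" and ml: "multilinear4 k" and rp: "P_curvature_form (P p) k"
    and fr: "adapted_frame p f1 f2 f3 f4"
  shows "k x y z w = k f1 f2 f1 f2 * wedge p f1 f2 x y * wedge p f1 f2 z w
    + k f3 f4 f3 f4 * wedge p f3 f4 x y * wedge p f3 f4 z w"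
proof -
  have F: "g p f1 f1 = 1" "g p f2 f2 = 1" "g p f3 f3 = 1" "g p f4 f4 = 1"
    "g p f1 f2 = 0" "g p f1 f3 = 0" "g p f1 f4 = 0" "g p f2 f3 = 0" "g p f2 f4 = 0" "g p f3 f4 = 0"
    "P p f1 = f1" "P p f2 = f2" "P p f3 = - f3" "P p f4 = - f4" and sp: "frame_expands p [f1, f2, f3, f4] UNIV"
    using fr by (auto simp: adapted_frame_def)
  have a1: "\<And>x y z w. k x y z w = - k y x z w" and a2: "\<And>x y z w. k x y z w = - k x y w z"
    and b: "\<And>x y z w. k x y z w + k y z x w + k z x y w = 0"
    and pi: "\<And>x y z w. k x y (P p z) (P p w) = k x y z w"
    using rp unfolding P_curvature_form_def algebraic_curvature_form_def by blast+
  have ac: "algebraic_curvature_form k" using rp by (simp add: P_curvature_form_def)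
  have z1: "k u u z w = 0" for u z w using a1[of u u z w] by simp
  have z2: "k x y u u = 0" for x y u using a2[of x y u u] by simp
  have m2: "k x y u v = 0" if "P p u = u" "P p v = - v" for x y u v
    using pi[of x y u v] that ml by simp
  have m2': "k x y v u = 0" if "P p u = u" "P p v = - v" for x y u v
    using pi[of x y v u] that ml by simp
  have m1: "k u v z w = 0" if "P p u = u" "P p v = - v" for z w u v
    using m2[OF that, of z w] algebraic_curvature_form_pair_sym[OF ac, of u v z w] by simp
  have m1': "k v u z w = 0" if "P p u = u" "P p v = - v" for z w u v
    using m2'[OF that, of z w] algebraic_curvature_form_pair_sym[OF ac, of v u z w] by simp
  have c1: "k a b c d = 0" if "P p a = a" "P p b = b" "P p c = - c" "P p d = - d" for a b c d
    using b[of a b c d] m1[of b c a d] m1'[of a c b d] that by simp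
  have c2: "k c d a b = 0" if "P p a = a" "P p b = b" "P p c = - c" "P p d = - d" for a b c d
    using c1[OF that] algebraic_curvature_form_pair_sym[OF ac, of a b c d] by simp
  have s1: "k f2 f1 z w = - k f1 f2 z w" "k f4 f3 z w = - k f3 f4 z w" for z w using a1 by blast+
  have s2: "k x y f2 f1 = - k x y f1 f2" "k x y f4 f3 = - k x y f3 f4" for x y using a2 by blast+
  have ex: "v = g p v f1 *\<^sub>R f1 + g p v f2 *\<^sub>R f2 + g p v f3 *\<^sub>R f3 + g p v f4 *\<^sub>R f4" for v
    using sp by (simp add: frame_expands_def add.assoc)
  have "k x y z w = k (g p x f1 *\<^sub>R f1 + g p x f2 *\<^sub>R f2 + g p x f3 *\<^sub>R f3 + g p x f4 *\<^sub>R f4)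
       (g p y f1 *\<^sub>R f1 + g p y f2 *\<^sub>R f2 + g p y f3 *\<^sub>R f3 + g p y f4 *\<^sub>R f4)
       (g p z f1 *\<^sub>R f1 + g p z f2 *\<^sub>R f2 + g p z f3 *\<^sub>R f3 + g p z f4 *\<^sub>R f4)
       (g p w f1 *\<^sub>R f1 + g p w f2 *\<^sub>R f2 + g p w f3 *\<^sub>R f3 + g p w f4 *\<^sub>R f4)"
    using ex[of x] ex[of y] ex[of z] ex[of w] by simp
  also have "\<dots> = k f1 f2 f1 f2 * wedge p f1 f2 x y * wedge p f1 f2 z w + k f3 f4 f3 f4 * wedge p f3 f4 x y * wedge p f3 f4 z w"
    using ml F by (simp add: z1 z2 m1 m1' m2 m2' c1 c2 s1 s2 wedge_def algebra_simps)
  finally show ?thesis .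
qed

lemma ginv_trace_adapted: assumes p: "p \<in> U" and fr: "adapted_frame p f1 f2 f3 f4"
  and B1: "\<And>y. linear (\<lambda>x. B x y)" and B2: "\<And>x. linear (B x)"
  shows "(\<Sum>i\<in>Basis. \<Sum>j\<in>Basis. ginv g p i j * B i j) = B f1 f1 + B f2 f2 + B f3 f3 + B f4 f4"
  using ginv_trace_frame[OF p _ B1 B2, of "[f1, f2, f3, f4]"] fr by (simp add: adapted_frame_def add.assoc)

lemma multilinear4_P_last: assumes p: "p \<in> U" and F: "multilinear4 F" shows "multilinear4 (\<lambda>x y z w. F x y z (P p w))"
proof -
  have "linear (\<lambda>w. F x y z (P p w))" for x y z
    using linear_compose[OF linear_P[OF p], of "F x y z"] F by (simp add: o_def multilinear4_def)
  thus ?thesis using F by (simp add: multilinear4_def)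
qed

lemma covtheta_nabla_cf: assumes p: "p \<in> U"
  shows "covtheta g P nabla nabla (cf i) (cf j) p = g p (nablaOmega p i) j"
  using ddir_theta[OF vf_cf vf_cf p, of i j] theta_eq_g_Omega[OF p, of "nabla (cf i) (cf j)"]
  by (simp add: covtheta_def cf_def)

lemma covtheta_nabla_P_cf: assumes p: "p \<in> U"
  shows "covtheta g P nabla nabla (cf i) (PF P (cf j)) p = g p (nablaOmega p i) (P p j)"
  using ddir_theta[OF vf_cf vf_PF[OF vf_cf] p, of i j] theta_eq_g_Omega[OF p, of "nabla (cf i) (PF P (cf j))"]
  by (simp add: covtheta_def cf_def PF_def)

lemma covtheta_Dtil: assumes A: "A \<in> vf U" and B: "B \<in> vf U" and p: "p \<in> U"
  shows "covtheta g P nabla Dt A (PF P B) p = g p (nablaOmega p (A p)) (P p (B p)) - g p (Om p) (Dtil_diff p (A p) (P p (B p)))"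
  using ddir_theta[OF A vf_PF[OF B] p] theta_eq_g_Omega[OF p, of "Dt A (PF P B)"] Dtil_eq[OF p, of A "PF P B"]
  by (simp add: covtheta_def PF_def p)


lemma ginv_double_trace_adapted:
  assumes p: "p \<in> U" and fr: "adapted_frame p f1 f2 f3 f4" and F: "multilinear4 F"
  shows "(\<Sum>i\<in>Basis. \<Sum>j\<in>Basis. \<Sum>k\<in>Basis. \<Sum>s\<in>Basis. ginv g p i j * ginv g p k s * F k i j s)
    = frame_contraction [f1, f2, f3, f4] F"
proof -
  define T where "T i j = F f1 i j f1 + F f2 i j f2 + F f3 i j f3 + F f4 i j f4" for i j
  have inner: "(\<Sum>k\<in>Basis. \<Sum>s\<in>Basis. ginv g p k s * F k i j s) = T i j" for i j
    unfolding T_def by (rule ginv_trace_adapted[OF p fr]) (use F in \<open>auto simp: multilinear4_def\<close>)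
  have lT1: "linear (\<lambda>i. T i j)" for j unfolding T_def
    by (intro linear_compose_add) (use F in \<open>auto simp: multilinear4_def\<close>)
  have lT2: "linear (T i)" for i unfolding T_def
    by (intro linear_compose_add) (use F in \<open>auto simp: multilinear4_def\<close>)
  have "(\<Sum>i\<in>Basis. \<Sum>j\<in>Basis. \<Sum>k\<in>Basis. \<Sum>s\<in>Basis. ginv g p i j * ginv g p k s * F k i j s)
     = (\<Sum>i\<in>Basis. \<Sum>j\<in>Basis. ginv g p i j * (\<Sum>k\<in>Basis. \<Sum>s\<in>Basis. ginv g p k s * F k i j s))"
    by (simp add: sum_distrib_left mult.assoc)
  also have "\<dots> = (\<Sum>i\<in>Basis. \<Sum>j\<in>Basis. ginv g p i j * T i j)" by (simp add: inner)
  also have "\<dots> = T f1 f1 + T f2 f2 + T f3 f3 + T f4 f4" by (rule ginv_trace_adapted[OF p fr lT1 lT2])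
  finally show ?thesis by (simp add: T_def frame_contraction_def ac_simps)
qed

lemma adapted_frame_facts:
  assumes p: "p \<in> U" and fr: "adapted_frame p f1 f2 f3 f4"
  shows "g p f1 f1 = 1" "g p f2 f2 = 1" "g p f3 f3 = 1" "g p f4 f4 = 1"
    "g p f1 f2 = 0" "g p f1 f3 = 0" "g p f1 f4 = 0" "g p f2 f3 = 0" "g p f2 f4 = 0" "g p f3 f4 = 0"
    "g p f2 f1 = 0" "g p f3 f1 = 0" "g p f4 f1 = 0" "g p f3 f2 = 0" "g p f4 f2 = 0" "g p f4 f3 = 0"
    "P p f1 = f1" "P p f2 = f2" "P p f3 = - f3" "P p f4 = - f4"
  using fr g_sym[OF p] by (auto simp: adapted_frame_def)

lemma g_adapted_expansion:
  assumes p: "p \<in> U" and fr: "adapted_frame p f1 f2 f3 f4"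
  shows "g p u v = g p u f1 * g p v f1 + g p u f2 * g p v f2 + g p u f3 * g p v f3 + g p u f4 * g p v f4"
proof -
  have "v = g p v f1 *\<^sub>R f1 + g p v f2 *\<^sub>R f2 + g p v f3 *\<^sub>R f3 + g p v f4 *\<^sub>R f4"
    using fr by (simp add: adapted_frame_def frame_expands_def add.assoc)
  hence "g p u v = g p u (g p v f1 *\<^sub>R f1 + g p v f2 *\<^sub>R f2 + g p v f3 *\<^sub>R f3 + g p v f4 *\<^sub>R f4)" by simp
  thus ?thesis using p by (simp add: mult.commute)
qed

lemma deltaP_adapted:
  assumes p: "p \<in> U" and fr: "adapted_frame p f1 f2 f3 f4"
  shows "deltaP g P nabla p = g p (nablaOmega p f1) (P p f1) + g p (nablaOmega p f2) (P p f2)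
    + g p (nablaOmega p f3) (P p f3) + g p (nablaOmega p f4) (P p f4)"
  unfolding deltaP_def covtheta_nabla_P_cf[OF p]
  by (rule ginv_trace_adapted[OF p fr]) (rule linearI; simp add: p)+

lemma divOmega_adapted:
  assumes p: "p \<in> U" and fr: "adapted_frame p f1 f2 f3 f4"
  shows "divOmega g P nabla p = g p (nablaOmega p f1) f1 + g p (nablaOmega p f2) f2
    + g p (nablaOmega p f3) f3 + g p (nablaOmega p f4) f4"
  unfolding divOmega_def covtheta_nabla_cf[OF p]
  by (rule ginv_trace_adapted[OF p fr]) (rule linearI; simp add: p)+

lemma Cform_contraction:
  assumes p: "p \<in> U" and fr: "adapted_frame p f1 f2 f3 f4"
  shows "frame_contraction [f1, f2, f3, f4] (Cform p) = (4 * deltaP g P nabla p + 5 * g p (Om p) (Om p)) / 8"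
  using p adapted_frame_facts[OF p fr] g_adapted_expansion[OF p fr, of "Om p" "Om p"]
  unfolding deltaP_adapted[OF p fr] frame_contraction_def Cform_def psi1_form_def S1_def S2_def Dtil_diff_def
  by (simp add: algebra_simps)

lemma Cform_P_contraction:
  assumes p: "p \<in> U" and fr: "adapted_frame p f1 f2 f3 f4"
  shows "frame_contraction [f1, f2, f3, f4] (\<lambda>x y z w. Cform p x y z (P p w))
    = (g p (Om p) (P p (Om p)) - 4 * divOmega g P nabla p) / 8"
  using p adapted_frame_facts[OF p fr] g_adapted_expansion[OF p fr, of "Om p" "Om p"]
    g_adapted_expansion[OF p fr, of "Om p" "P p (Om p)"]
  unfolding divOmega_adapted[OF p fr] frame_contraction_def Cform_def psi1_form_def S1_def S2_def Dtil_diff_def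
  by (simp add: algebra_simps g_P_swap)

lemma wedge_contractions:
  assumes p: "p \<in> U" and fr: "adapted_frame p f1 f2 f3 f4"
    and k: "\<And>x y z w. k x y z w = a * wedge p f1 f2 x y * wedge p f1 f2 z w + b * wedge p f3 f4 x y * wedge p f3 f4 z w"
  shows "frame_contraction [f1, f2, f3, f4] k = - 2 * a - 2 * b"
    and "frame_contraction [f1, f2, f3, f4] (\<lambda>x y z w. k x y z (P p w)) = 2 * b - 2 * a"
  using p adapted_frame_facts[OF p fr] unfolding k frame_contraction_def wedge_def
  by (simp_all add: algebra_simps)


lemma wedge_pi_decomposition: assumes p: "p \<in> U" and fr: "adapted_frame p f1 f2 f3 f4"
  shows "a * wedge p f1 f2 x y * wedge p f1 f2 z w + b * wedge p f3 f4 x y * wedge p f3 f4 z w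
     = (- (a + b) / 4) * ((1/2) * psi1_form (g p) (g p) x y z w + (1/2) * psi1_form (g p) (g p) x y (P p z) (P p w))
       + ((b - a) / 4) * psi1_form (g p) (\<lambda>u v. g p u (P p v)) x y z w"
  using p adapted_frame_facts[OF p fr] unfolding psi1_form_def wedge_def
  by (simp add: g_adapted_expansion[OF p fr, of y z] g_adapted_expansion[OF p fr, of x w] g_adapted_expansion[OF p fr, of x z] g_adapted_expansion[OF p fr, of y w]
     g_adapted_expansion[OF p fr, of y "P p z"] g_adapted_expansion[OF p fr, of x "P p w"] g_adapted_expansion[OF p fr, of x "P p z"] g_adapted_expansion[OF p fr, of y "P p w"]
     g_P_swap algebra_simps add_divide_distrib diff_divide_distrib)

lemma pi1_at: "pi1 g X Y Z W p = (1/2) * psi1_form (g p) (g p) (X p) (Y p) (Z p) (W p)"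
  by (simp add: pi1_def psi1_def psi1_form_def gF_def)

lemma pi2_at: "pi2 g P X Y Z W p = (1/2) * psi1_form (g p) (g p) (X p) (Y p) (P p (Z p)) (P p (W p))"
  by (simp add: pi2_def psi2_def psi1_def psi1_form_def gF_def PF_def)

lemma pi3_at: "pi3 g P X Y Z W p = psi1_form (g p) (\<lambda>u v. g p u (P p v)) (X p) (Y p) (Z p) (W p)"
  by (simp add: pi3_def psi1_def psi1_form_def gF_def PF_def)

lemma psi1_S1_at:
  assumes p: "p \<in> U"
  shows "psi1 g (\<lambda>A B q. (1/16) * th A q * th B q) X Y Z W p = psi1_form (g p) (S1 p) (X p) (Y p) (Z p) (W p)"
  by (simp add: psi1_def psi1_form_def gF_def S1_def theta_eq_g_Omega[OF p])

lemma psi2_S2_at: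
  assumes X: "X \<in> vf U" and Y: "Y \<in> vf U" and Z: "Z \<in> vf U" and W: "W \<in> vf U" and p: "p \<in> U"
  shows "psi2 g P (\<lambda>A B q. - (1/4) * covtheta g P nabla Dt A (PF P B) q
        - (1/16) * th (PF P A) q * th (PF P B) q) X Y Z W p
      = psi1_form (g p) (S2 p) (X p) (Y p) (P p (Z p)) (P p (W p))"
  unfolding psi2_def psi1_def
    covtheta_Dtil[OF X vf_PF[OF Z] p] covtheta_Dtil[OF X vf_PF[OF W] p]
    covtheta_Dtil[OF Y vf_PF[OF Z] p] covtheta_Dtil[OF Y vf_PF[OF W] p]
  using p by (simp add: psi1_form_def gF_def S2_def theta_eq_g_Omega[OF p] PF_def)

end

section \<open>The curvature of \<open>D~\<close> as a Riemannian \<open>P\<close>-tensor\<close>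

locale w1_manifold_RP = w1_manifold U g P nabla for U :: "'a::euclidean_space set" and g P nabla +
  assumes rp: "is_RPtensor U P (curv4 g (Dtil g P nabla))"
begin
abbreviation "K \<equiv> curv4 g Dt"

lemma RP_antisym_1:
  "X \<in> vf U \<Longrightarrow> Y \<in> vf U \<Longrightarrow> Z \<in> vf U \<Longrightarrow> W \<in> vf U \<Longrightarrow> p \<in> U \<Longrightarrow> K X Y Z W p = - K Y X Z W p"
  using rp unfolding is_RPtensor_def by blast
lemma RP_antisym_2:
  "X \<in> vf U \<Longrightarrow> Y \<in> vf U \<Longrightarrow> Z \<in> vf U \<Longrightarrow> W \<in> vf U \<Longrightarrow> p \<in> U \<Longrightarrow> K X Y Z W p = - K X Y W Z p"
  using rp unfolding is_RPtensor_def by blast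
lemma RP_bianchi:
  "X \<in> vf U \<Longrightarrow> Y \<in> vf U \<Longrightarrow> Z \<in> vf U \<Longrightarrow> W \<in> vf U \<Longrightarrow> p \<in> U \<Longrightarrow> K X Y Z W p + K Y Z X W p + K Z X Y W p = 0"
  using rp unfolding is_RPtensor_def by blast
lemma RP_P_invariant:
  "X \<in> vf U \<Longrightarrow> Y \<in> vf U \<Longrightarrow> Z \<in> vf U \<Longrightarrow> W \<in> vf U \<Longrightarrow> p \<in> U \<Longrightarrow> K X Y (PF P Z) (PF P W) p = K X Y Z W p"
  using rp unfolding is_RPtensor_def by blast

lemma curv4_Dtil_expand_2: assumes "X \<in> vf U" "Y \<in> vf U" "Z \<in> vf U" "W \<in> vf U" "p \<in> U"
  shows "K X Y Z W p = (\<Sum>b\<in>Basis. (Y p \<bullet> b) * K X (cf b) Z W p)"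
proof -
  have "K X Y Z W p = - K Y X Z W p" by (rule RP_antisym_1[OF assms])
  also have "\<dots> = - (\<Sum>b\<in>Basis. (Y p \<bullet> b) * K (cf b) X Z W p)" by (simp only: curv4_Dtil_expand_1[OF assms(2,1,3,5)])
  also have "\<dots> = (\<Sum>b\<in>Basis. (Y p \<bullet> b) * K X (cf b) Z W p)"
  proof -
    have "K (cf b) X Z W p = - K X (cf b) Z W p" for b by (rule RP_antisym_1[OF vf_cf assms(1,3,4,5)])
    thus ?thesis by (simp add: sum_negf)
  qed
  finally show ?thesis .
qed

lemma curv4_Dtil_expand_3: assumes "X \<in> vf U" "Y \<in> vf U" "Z \<in> vf U" "W \<in> vf U" "p \<in> U"
  shows "K X Y Z W p = (\<Sum>c\<in>Basis. (Z p \<bullet> c) * K X Y (cf c) W p)"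
proof -
  have "K X Y Z W p = - K X Y W Z p" by (rule RP_antisym_2[OF assms])
  also have "\<dots> = - (\<Sum>c\<in>Basis. (Z p \<bullet> c) * K X Y W (cf c) p)" using curv4_Dtil_expand_4[OF assms(5), of X Y W Z] by simp
  also have "\<dots> = (\<Sum>c\<in>Basis. (Z p \<bullet> c) * K X Y (cf c) W p)"
  proof -
    have "K X Y W (cf c) p = - K X Y (cf c) W p" for c by (rule RP_antisym_2[OF assms(1,2,4) vf_cf assms(5)])
    thus ?thesis by (simp add: sum_negf)
  qed
  finally show ?thesis .
qed

text \<open>The hypothesis on \<open>R~\<close> is about vector fields; tensoriality (in the first slot directly, in
  the others through the symmetries) turns \<open>R~\<close> into a pointwise 4-form.\<close>
definition Kcoeff where "Kcoeff p a b c d = K (cf a) (cf b) (cf c) (cf d) p"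
definition Kform where "Kform p x y z w = (\<Sum>a\<in>Basis. (x \<bullet> a) * (\<Sum>b\<in>Basis. (y \<bullet> b) * (\<Sum>c\<in>Basis. (z \<bullet> c) *
    (\<Sum>d\<in>Basis. (w \<bullet> d) * Kcoeff p a b c d))))"

lemma curv4_Dtil_eq_Kform: assumes X: "X \<in> vf U" and Y: "Y \<in> vf U" and Z: "Z \<in> vf U" and W: "W \<in> vf U" and p: "p \<in> U"
  shows "K X Y Z W p = Kform p (X p) (Y p) (Z p) (W p)"
proof -
  have s1: "K X Y Z W p = (\<Sum>a\<in>Basis. (X p \<bullet> a) * K (cf a) Y Z W p)" by (rule curv4_Dtil_expand_1[OF X Y Z p])
  have s2: "K (cf a) Y Z W p = (\<Sum>b\<in>Basis. (Y p \<bullet> b) * K (cf a) (cf b) Z W p)" for a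
    by (rule curv4_Dtil_expand_2[OF vf_cf Y Z W p])
  have s3: "K (cf a) (cf b) Z W p = (\<Sum>c\<in>Basis. (Z p \<bullet> c) * K (cf a) (cf b) (cf c) W p)" for a b
    by (rule curv4_Dtil_expand_3[OF vf_cf vf_cf Z W p])
  have s4: "K (cf a) (cf b) (cf c) W p = (\<Sum>d\<in>Basis. (W p \<bullet> d) * Kcoeff p a b c d)" for a b c
    unfolding Kcoeff_def by (rule curv4_Dtil_expand_4[OF p])
  show ?thesis by (simp only: s1 s2 s3 s4 Kform_def)
qed

lemma Kform_cf: "p \<in> U \<Longrightarrow> Kform p x y z w = K (cf x) (cf y) (cf z) (cf w) p"
  using curv4_Dtil_eq_Kform[OF vf_cf vf_cf vf_cf vf_cf] by (simp add: cf_def)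

lemma Kform_multilinear: "multilinear4 (Kform p)"
  unfolding multilinear4_def Kform_def
  by (auto intro!: linearI simp: inner_add_left distrib_left distrib_right sum.distrib sum_distrib_left mult_ac)

lemma Kform_P_curvature_form: assumes p: "p \<in> U" shows "P_curvature_form (P p) (Kform p)"
proof -
  have "Kform p x y (P p z) (P p w) = Kform p x y z w" for x y z w
  proof -
    have "Kform p x y (P p z) (P p w) = K (cf x) (cf y) (PF P (cf z)) (PF P (cf w)) p"
      using curv4_Dtil_eq_Kform[OF vf_cf vf_cf vf_PF[OF vf_cf] vf_PF[OF vf_cf] p] by (simp add: cf_def PF_def)
    thus ?thesis using RP_P_invariant[OF vf_cf vf_cf vf_cf vf_cf p] Kform_cf[OF p] by simp
  qed
  moreover have "Kform p x y z w = - Kform p y x z w" for x y z w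
    unfolding Kform_cf[OF p] by (rule RP_antisym_1[OF vf_cf vf_cf vf_cf vf_cf p])
  moreover have "Kform p x y z w = - Kform p x y w z" for x y z w
    unfolding Kform_cf[OF p] by (rule RP_antisym_2[OF vf_cf vf_cf vf_cf vf_cf p])
  moreover have "Kform p x y z w + Kform p y z x w + Kform p z x y w = 0" for x y z w
    unfolding Kform_cf[OF p] by (rule RP_bianchi[OF vf_cf vf_cf vf_cf vf_cf p])
  ultimately show ?thesis unfolding P_curvature_form_def algebraic_curvature_form_def by blast
qed

lemma curv4_nabla_eq_Kform: assumes X: "X \<in> vf U" and Y: "Y \<in> vf U" and Z: "Z \<in> vf U" and W: "W \<in> vf U" and p: "p \<in> U"
  shows "curv4 g nabla X Y Z W p = Kform p (X p) (Y p) (Z p) (W p) - Cform p (X p) (Y p) (Z p) (W p)"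
proof -
  have "K X Y Z W p = g p (curv nabla X Y Z p + curv_diff p (X p) (Y p) (Z p)) (W p)"
    by (simp add: curv4_def gF_def curv_Dtil_eq[OF X Y Z p])
  thus ?thesis using curv4_Dtil_eq_Kform[OF assms] p g_curv_diff_eq[OF p] by (simp add: curv4_def gF_def)
qed


lemma Kform_adapted:
  assumes p: "p \<in> U" and fr: "adapted_frame p f1 f2 f3 f4"
  shows "Kform p x y z w = Kform p f1 f2 f1 f2 * wedge p f1 f2 x y * wedge p f1 f2 z w
    + Kform p f3 f4 f3 f4 * wedge p f3 f4 x y * wedge p f3 f4 z w"
  by (rule P_curvature_form_adapted[OF p Kform_multilinear Kform_P_curvature_form[OF p] fr])

lemma tau_adapted:
  assumes p: "p \<in> U" and fr: "adapted_frame p f1 f2 f3 f4"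
  shows "tau g nabla p = - 2 * (Kform p f1 f2 f1 f2 + Kform p f3 f4 f3 f4)
    - (4 * deltaP g P nabla p + 5 * g p (Om p) (Om p)) / 8"
proof -
  have "tau g nabla p = (\<Sum>i\<in>Basis. \<Sum>j\<in>Basis. \<Sum>k\<in>Basis. \<Sum>s\<in>Basis.
      ginv g p i j * ginv g p k s * (\<lambda>x y z w. Kform p x y z w - Cform p x y z w) k i j s)"
    unfolding tau_def using curv4_nabla_eq_Kform[OF vf_cf vf_cf vf_cf vf_cf p] by (simp add: cf_def)
  also have "\<dots> = frame_contraction [f1, f2, f3, f4] (Kform p) - frame_contraction [f1, f2, f3, f4] (Cform p)"
    unfolding ginv_double_trace_adapted[OF p fr multilinear4_diff[OF Kform_multilinear Cform_multilinear[OF p]]]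
    by (simp add: frame_contraction_def sum_list_subtractf)
  finally show ?thesis
    using wedge_contractions(1)[OF p fr Kform_adapted[OF p fr]] Cform_contraction[OF p fr] by simp
qed

lemma taustar_adapted:
  assumes p: "p \<in> U" and fr: "adapted_frame p f1 f2 f3 f4"
  shows "taustar g P nabla p = 2 * (Kform p f3 f4 f3 f4 - Kform p f1 f2 f1 f2)
    - (g p (Om p) (P p (Om p)) - 4 * divOmega g P nabla p) / 8"
proof -
  have ml: "multilinear4 (\<lambda>x y z w. Kform p x y z (P p w) - Cform p x y z (P p w))"
    using multilinear4_P_last[OF p multilinear4_diff[OF Kform_multilinear Cform_multilinear[OF p]]] by simp
  have "taustar g P nabla p = (\<Sum>i\<in>Basis. \<Sum>j\<in>Basis. \<Sum>k\<in>Basis. \<Sum>s\<in>Basis.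
      ginv g p i j * ginv g p k s * (\<lambda>x y z w. Kform p x y z (P p w) - Cform p x y z (P p w)) k i j s)"
    unfolding taustar_def using curv4_nabla_eq_Kform[OF vf_cf vf_cf vf_cf vf_PF[OF vf_cf] p]
    by (simp add: cf_def PF_def)
  also have "\<dots> = frame_contraction [f1, f2, f3, f4] (\<lambda>x y z w. Kform p x y z (P p w))
      - frame_contraction [f1, f2, f3, f4] (\<lambda>x y z w. Cform p x y z (P p w))"
    unfolding ginv_double_trace_adapted[OF p fr ml] by (simp add: frame_contraction_def sum_list_subtractf)
  finally show ?thesis
    using wedge_contractions(2)[OF p fr Kform_adapted[OF p fr]] Cform_P_contraction[OF p fr] by simp
qed

lemma curv4_nabla_formula:
  assumes X: "X \<in> vf U" and Y: "Y \<in> vf U" and Z: "Z \<in> vf U" and W: "W \<in> vf U" and p: "p \<in> U"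
  shows "curv4 g nabla X Y Z W p =
      (1/64) * (8 * tau g nabla p + 4 * deltaP g P nabla p + 5 * theta g P nabla (Omega g P nabla) p)
        * (pi1 g X Y Z W p + pi2 g P X Y Z W p)
    + (1/64) * (8 * taustar g P nabla p - 4 * divOmega g P nabla p
        + theta g P nabla (PF P (Omega g P nabla)) p) * pi3 g P X Y Z W p
    - (theta g P nabla (Omega g P nabla) p / 16) * pi2 g P X Y Z W p
    - psi1 g (\<lambda>A B q. (1/16) * theta g P nabla A q * theta g P nabla B q) X Y Z W p
    - psi2 g P (\<lambda>A B q. - (1/4) * covtheta g P nabla (Dtil g P nabla) A (PF P B) q
        - (1/16) * theta g P nabla (PF P A) q * theta g P nabla (PF P B) q) X Y Z W p"
proof -
  obtain f1 f2 f3 f4 where fr: "adapted_frame p f1 f2 f3 f4" using adapted_frame_exists[OF p] by blast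
  define a where "a = Kform p f1 f2 f1 f2"
  define b where "b = Kform p f3 f4 f3 f4"
  have K: "Kform p x y z w = a * wedge p f1 f2 x y * wedge p f1 f2 z w + b * wedge p f3 f4 x y * wedge p f3 f4 z w"
    for x y z w unfolding a_def b_def by (rule Kform_adapted[OF p fr])
  have tau: "tau g nabla p = - 2 * (a + b) - (4 * deltaP g P nabla p + 5 * g p (Om p) (Om p)) / 8"
    unfolding a_def b_def by (rule tau_adapted[OF p fr])
  have taustar: "taustar g P nabla p = 2 * (b - a) - (g p (Om p) (P p (Om p)) - 4 * divOmega g P nabla p) / 8"
    unfolding a_def b_def by (rule taustar_adapted[OF p fr])
  have "theta g P nabla (PF P (Omega g P nabla)) p = g p (Om p) (P p (Om p))"
    using theta_eq_g_Omega[OF p] by (simp add: PF_def)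
  thus ?thesis
    unfolding curv4_nabla_eq_Kform[OF X Y Z W p] K wedge_pi_decomposition[OF p fr] tau taustar
      theta_eq_g_Omega[OF p] Cform_def pi1_at pi2_at pi3_at psi1_S1_at[OF p] psi2_S2_at[OF X Y Z W p]
    by (simp add: algebra_simps add_divide_distrib diff_divide_distrib)
qed

end

theorem theorem5p3:
  fixes U :: "'a::euclidean_space set"
    and g :: "'a \<Rightarrow> 'a \<Rightarrow> 'a \<Rightarrow> real"
    and P :: "'a \<Rightarrow> 'a \<Rightarrow> 'a"
    and nabla :: "('a \<Rightarrow> 'a) \<Rightarrow> ('a \<Rightarrow> 'a) \<Rightarrow> ('a \<Rightarrow> 'a)"
  assumes "rapm U g P"
    and "is_LC U g nabla"
    and "is_W1 U g P nabla"
    and "is_RPtensor U P (curv4 g (Dtil g P nabla))"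
  shows "\<forall>X\<in>vf U. \<forall>Y\<in>vf U. \<forall>Z\<in>vf U. \<forall>W\<in>vf U. \<forall>p\<in>U.
    curv4 g nabla X Y Z W p =
      (1/64) * (8 * tau g nabla p + 4 * deltaP g P nabla p + 5 * theta g P nabla (Omega g P nabla) p)
        * (pi1 g X Y Z W p + pi2 g P X Y Z W p)
    + (1/64) * (8 * taustar g P nabla p - 4 * divOmega g P nabla p
        + theta g P nabla (PF P (Omega g P nabla)) p) * pi3 g P X Y Z W p
    - (theta g P nabla (Omega g P nabla) p / 16) * pi2 g P X Y Z W p
    - psi1 g (\<lambda>A B q. (1/16) * theta g P nabla A q * theta g P nabla B q) X Y Z W p
    - psi2 g P (\<lambda>A B q. - (1/4) * covtheta g P nabla (Dtil g P nabla) A (PF P B) q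
        - (1/16) * theta g P nabla (PF P A) q * theta g P nabla (PF P B) q) X Y Z W p"
proof -
  interpret w1_manifold_RP U g P nabla
    by (intro w1_manifold_RP.intro w1_manifold.intro w1_manifold_RP_axioms.intro assms)
  show ?thesis using curv4_nabla_formula by blast
qed

end
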